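(* Let $\mathbb{K}$ be an infinite field of characteristic $p>2$. In the algebra $R_p=\mathbb{K}\langle Y\cup Z\rangle/I_p$, the image of every $Y$-proper polynomial is a linear combination of the images of polynomials $g=h(y_{i_1},\dots,y_{i_{2m+n}},z_{j_1},\dots,z_{j_{n+2r}})\,z_{k_1}\cdots z_{k_q}$ with $i_1<\dots<i_{2m+n}$, $j_1\le\dots\le j_{n+2r}$, $k_1<\dots<k_q$, and such that the degree of $h$ in each variable $z\in Z$ is less than $p$.
   Context: $\mathbb{K}\langle Y\cup Z\rangle$ is the free associative algebra on disjoint countable sets $Y=\{y_1,\dots\}$ (degree $0$) and $Z=\{z_1,\dots\}$ (degree $1$). Notation: $[a,b]=ab-ba$, $[a_1,\dots,a_n]=[[a_1,\dots,a_{n-1}],a_n]$, $a\circ b=ab+ba$. A polynomial is $Y$-proper if it lies in the subalgebra generated by $Z$ and all commutators $[x_1,\dots,x_s]$, $s\ge2$, of variables $x_i\in Y\cup Z$. A $T_2$-ideal is an ideal stable under all graded endomorphisms (sending $y_i$ to degree-$0$ and $z_i$ to degree-$1$ polynomials). $I_p$ is the $T_2$-ideal generated by: (1) $[y_1,y_2,y_3]$, $[y_1,y_2,z_3]$; (2) $[y_1,z_2,y_3]$; (3) $[y_1,z_2]\circ z_3$; (4) $[z_1\circ z_2,z_3]$; (5) $(z_1\circ z_2)(z_3\circ z_4)-(z_1\circ z_3)(z_2\circ z_4)$; (6) $[x_1,y_2][y_3,x_4]+[x_1,y_3][y_2,x_4]$ for all choices $x_1\in\{y_1,z_1\}$, $x_4\in\{y_4,z_4\}$;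 (7) $[y_1,z_2](z_3\circ z_4)-[y_1,z_3](z_2\circ z_4)$; (8) $[y_1,z_1]\cdots[y_{2k-2},z_1](z_2\circ z_1)z_1^{2n}$ and (9) $[y_1,z_1]\cdots[y_{2k-1},z_1]z_1^{2n}$, for all integers $k\ge1$, $n\ge0$ with $2n+2k-1=p$. For nonnegative integers $m,n,r$ and indices $i_t,j_l$, $h(y_{i_1},\dots,y_{i_{2m+n}},z_{j_1},\dots,z_{j_{n+2r}})=[y_{i_1},y_{i_2}]\cdots[y_{i_{2m-1}},y_{i_{2m}}]\cdot[y_{i_{2m+1}},z_{j_1}]\cdots[y_{i_{2m+n}},z_{j_n}]\cdot(z_{j_{n+1}}\circ z_{j_{n+2}})\cdots(z_{j_{n+2r-1}}\circ z_{j_{n+2r}})$. *)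

theory Defs
  imports Main "HOL-Library.Poly_Mapping"
begin

text \<open>Variables: Y i has Z2-degree 0, Z i has Z2-degree 1.\<close>
datatype var = Yv nat | Zv nat

datatype word = Word "var list"

fun letters :: "word \<Rightarrow> var list" where "letters (Word w) = w"

instantiation word :: monoid_add
begin
definition zero_word :: word where "zero_word = Word []"
fun plus_word :: "word \<Rightarrow> word \<Rightarrow> word" where
  "plus_word (Word a) (Word b) = Word (a @ b)"
instance
proof
  fix a b c :: word
  show "a + b + c = a + (b + c)" by (cases a; cases b; cases c) simp_all
  show "0 + a = a" by (cases a) (simp add: zero_word_def)
  show "a + 0 = a" by (cases a) (simp add: zero_word_def)
qed
end

text \<open>The free associative (unital) algebra over 'k: finitely supported
  functions from words to 'k, with convolution product (a ring_1).\<close>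
type_synonym 'k fa = "word \<Rightarrow>\<^sub>0 'k"

definition var :: "var \<Rightarrow> 'k::ring_1 fa" where
  "var v = Poly_Mapping.single (Word [v]) 1"

abbreviation yv :: "nat \<Rightarrow> 'k::ring_1 fa" where "yv i \<equiv> var (Yv i)"
abbreviation zv :: "nat \<Rightarrow> 'k::ring_1 fa" where "zv i \<equiv> var (Zv i)"

definition const :: "'k::ring_1 \<Rightarrow> 'k fa" where
  "const c = Poly_Mapping.single (Word []) c"

definition comm :: "'a::ring \<Rightarrow> 'a \<Rightarrow> 'a" where "comm a b = a * b - b * a"
definition jord :: "'a::ring \<Rightarrow> 'a \<Rightarrow> 'a" where "jord a b = a * b + b * a"

definition lcomm :: "'a::ring \<Rightarrow> 'a list \<Rightarrow> 'a" where
  "lcomm a bs = foldl comm a bs"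

definition zcount :: "var list \<Rightarrow> nat" where
  "zcount w = length (filter (\<lambda>v. case v of Zv _ \<Rightarrow> True | Yv _ \<Rightarrow> False) w)"

definition homog :: "nat \<Rightarrow> 'k::ring_1 fa \<Rightarrow> bool" where
  "homog d f \<longleftrightarrow> (\<forall>w \<in> Poly_Mapping.keys f. zcount (letters w) mod 2 = d)"

definition subst :: "(var \<Rightarrow> 'k::ring_1 fa) \<Rightarrow> 'k fa \<Rightarrow> 'k fa" where
  "subst \<sigma> f = (\<Sum>w \<in> Poly_Mapping.keys f. const (Poly_Mapping.lookup f w) * prod_list (map \<sigma> (letters w)))"

definition graded_subst :: "(var \<Rightarrow> 'k::ring_1 fa) \<Rightarrow> bool" where
  "graded_subst \<sigma> \<longleftrightarrow> (\<forall>i. homog 0 (\<sigma> (Yv i)) \<and> homog 1 (\<sigma> (Zv i)))"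

inductive_set T2_ideal :: "'k::ring_1 fa set \<Rightarrow> 'k fa set" for S where
  gen: "f \<in> S \<Longrightarrow> f \<in> T2_ideal S"
| zero: "0 \<in> T2_ideal S"
| add: "f \<in> T2_ideal S \<Longrightarrow> g \<in> T2_ideal S \<Longrightarrow> f + g \<in> T2_ideal S"
| lmult: "f \<in> T2_ideal S \<Longrightarrow> a * f \<in> T2_ideal S"
| rmult: "f \<in> T2_ideal S \<Longrightarrow> f * a \<in> T2_ideal S"
| endo: "f \<in> T2_ideal S \<Longrightarrow> graded_subst \<sigma> \<Longrightarrow> subst \<sigma> f \<in> T2_ideal S"

definition Ip_gens :: "nat \<Rightarrow> 'k::ring_1 fa set" where
  "Ip_gens p =
     {lcomm (yv 1) [yv 2, yv 3], lcomm (yv 1) [yv 2, zv 3]}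
   \<union> {lcomm (yv 1) [zv 2, yv 3]}
   \<union> {jord (comm (yv 1) (zv 2)) (zv 3)}
   \<union> {comm (jord (zv 1) (zv 2)) (zv 3)}
   \<union> {jord (zv 1) (zv 2) * jord (zv 3) (zv 4) - jord (zv 1) (zv 3) * jord (zv 2) (zv 4)}
   \<union> {comm x1 (yv 2) * comm (yv 3) x4 + comm x1 (yv 3) * comm (yv 2) x4 | x1 x4.
        x1 \<in> {yv 1, zv 1} \<and> x4 \<in> {yv 4, zv 4}}
   \<union> {comm (yv 1) (zv 2) * jord (zv 3) (zv 4) - comm (yv 1) (zv 3) * jord (zv 2) (zv 4)}
   \<union> {prod_list (map (\<lambda>t. comm (yv (t+1)) (zv 1)) [0..<2*k-2]) * jord (zv 2) (zv 1) * zv 1 ^ (2*n)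
        | k n. k \<ge> 1 \<and> 2*n + 2*k - 1 = p}
   \<union> {prod_list (map (\<lambda>t. comm (yv (t+1)) (zv 1)) [0..<2*k-1]) * zv 1 ^ (2*n)
        | k n. k \<ge> 1 \<and> 2*n + 2*k - 1 = p}"

definition Ip :: "nat \<Rightarrow> 'k::ring_1 fa set" where
  "Ip p = T2_ideal (Ip_gens p)"

text \<open>The (unital) subalgebra generated by all z_i and all commutators
  [x_1,...,x_s], s \<ge> 2, of variables.\<close>
inductive_set Y_proper :: "'k::ring_1 fa set" where
  const: "const c \<in> Y_proper"
| zvar: "zv i \<in> Y_proper"
| commutator: "length xs \<ge> 1 \<Longrightarrow> lcomm (var x) (map var xs) \<in> Y_proper"
| add: "f \<in> Y_proper \<Longrightarrow> g \<in> Y_proper \<Longrightarrow> f + g \<in> Y_proper"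
| mult: "f \<in> Y_proper \<Longrightarrow> g \<in> Y_proper \<Longrightarrow> f * g \<in> Y_proper"

text \<open>h(y_{i_1},...,y_{i_{2m+n}}, z_{j_1},...,z_{j_{n+2r}}), with is = [i_1,...],
  js = [j_1,...] (0-based list positions).\<close>
definition hpoly :: "nat \<Rightarrow> nat \<Rightarrow> nat \<Rightarrow> nat list \<Rightarrow> nat list \<Rightarrow> 'k::ring_1 fa" where
  "hpoly m n r is js =
     prod_list (map (\<lambda>t. comm (yv (is ! (2*t))) (yv (is ! (2*t+1)))) [0..<m])
   * prod_list (map (\<lambda>t. comm (yv (is ! (2*m+t))) (zv (js ! t))) [0..<n])
   * prod_list (map (\<lambda>t. jord (zv (js ! (n+2*t))) (zv (js ! (n+2*t+1)))) [0..<r])"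

definition deg_in :: "var \<Rightarrow> 'k::ring_1 fa \<Rightarrow> nat" where
  "deg_in v f = Max (insert 0 ((\<lambda>w. count_list (letters w) v) ` Poly_Mapping.keys f))"

definition g_set :: "nat \<Rightarrow> 'k::ring_1 fa set" where
  "g_set p = {hpoly m n r is js * prod_list (map zv ks) | m n r is js ks.
      length is = 2*m + n \<and> length js = n + 2*r \<and>
      sorted_wrt (<) is \<and> sorted js \<and> sorted_wrt (<) ks \<and>
      (\<forall>c. deg_in (Zv c) (hpoly m n r is js :: 'k fa) < p)}"

end

theory Submission
  imports Defs "HOL-Computational_Algebra.Primes"
begin

text \<open>
  Modulo \<open>I\<^sub>p\<close> the commutators \<open>[y\<^sub>a,y\<^sub>b]\<close> and the Jordan products \<open>z\<^sub>a \<circ> z\<^sub>b\<close> are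
  central, and \<open>[y\<^sub>a,z\<^sub>b]\<close> anticommutes with every \<open>z\<^sub>c\<close>.  A \<open>Y\<close>-proper polynomial is a
  linear combination of products of the atoms \<open>z\<^sub>c\<close>, \<open>[y\<^sub>a,y\<^sub>b]\<close>, \<open>[y\<^sub>a,z\<^sub>b]\<close>, and
  multiplying \<open>h \<cdot> z\<^sub>k\<^sub>1\<cdots>z\<^sub>k\<^sub>q\<close> on the right by an atom gives again a combination of such
  polynomials: \<open>[y\<^sub>a,y\<^sub>b]\<close> is absorbed into \<open>h\<close>, and so is \<open>[y\<^sub>a,z\<^sub>b]\<close> after moving it past
  the \<open>z\<close>'s at the cost of a sign; a repeated \<open>z\<^sub>c z\<^sub>c\<close> becomes \<open>\<onehalf> z\<^sub>c \<circ> z\<^sub>c\<close>, which is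
  absorbed as well, and an out-of-order \<open>z\<^sub>k z\<^sub>c\<close> is rewritten as \<open>z\<^sub>c \<circ> z\<^sub>k - z\<^sub>c z\<^sub>k\<close>.

  The enlarged \<open>h\<close> is then normalised.  By the identities (5)--(7) it is symmetric in
  its \<open>z\<close>-arguments and alternating in its \<open>y\<close>-arguments, so its indices can be sorted,
  and a repeated \<open>y\<close> kills it because \<open>2 \<noteq> 0\<close>.  If some \<open>z\<^sub>c\<close> occurs \<open>p\<close> times, the
  \<open>z\<close>-arguments can be rearranged so that these occurrences form the left-hand side of
  identity (8) or (9), and \<open>h\<close> vanishes.
\<close>

section \<open>Substitution in the free algebra\<close>

lemma letters_plus[simp]: "letters (a + b) = letters a @ letters b"
  by (cases a; cases b) simp
lemma letters_zero[simp]: "letters 0 = []" by (simp add: zero_word_def)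
lemma Word_letters[simp]: "Word (letters w) = w" by (cases w) simp

lemma const_0[simp]: "const 0 = 0" by (simp add: const_def)
lemma const_1[simp]: "const 1 = 1"
  by (simp add: const_def zero_word_def[symmetric])
lemma const_add: "const (a+b) = const a + const b" by (simp add: const_def single_add)
lemma const_mult: "const (a*b) = const a * const b"
  by (simp add: const_def mult_single zero_word_def)
lemma const_uminus: "const (-a) = - const a" by (simp add: const_def single_uminus)

lemma update_eq_add_single:
  "a \<notin> Poly_Mapping.keys f \<Longrightarrow> Poly_Mapping.update a b f = f + Poly_Mapping.single a b"
  by (rule poly_mapping_eqI) (auto simp: lookup_update lookup_add lookup_single in_keys_iff when_def)

lemma poly_mapping_add_single_induct[case_names zero add]:
  assumes "P 0" "\<And>f w c. P f \<Longrightarrow> P (f + Poly_Mapping.single w c)"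
  shows "P x"
proof (induction x rule: update_induct)
  case const then show ?case using assms(1) .
next
  case (update f a b) then show ?case using assms(2) update_eq_add_single by metis
qed

lemma const_comm: "const c * x = x * (const c :: 'k::comm_ring_1 fa)"
proof (induction x rule: poly_mapping_add_single_induct)
  case zero then show ?case by simp
next
  case (add f w d)
  have "const c * Poly_Mapping.single w d = Poly_Mapping.single w d * const c"
    by (cases w) (simp add: const_def mult_single mult.commute)
  then show ?case using add by (simp add: algebra_simps)
qed

lemma mult_const_left_commute: "x * (const c * y) = const c * (x * (y :: 'k::comm_ring_1 fa))"
proof -
  have "x * const c = const c * x" by (rule const_comm[symmetric])
  then show ?thesis by (metis mult.assoc)
qed

lemma prod_var: "prod_list (map var vs) = (Poly_Mapping.single (Word vs) 1 :: 'k::ring_1 fa)"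
  by (induction vs) (auto simp: var_def mult_single zero_word_def[symmetric])

lemma subst_eq_sum:
  assumes "finite S" "Poly_Mapping.keys f \<subseteq> S"
  shows "subst \<sigma> f = (\<Sum>w\<in>S. const (Poly_Mapping.lookup f w) * prod_list (map \<sigma> (letters w)))"
  unfolding subst_def
  by (rule sum.mono_neutral_left) (use assms in \<open>auto simp: in_keys_iff\<close>)

lemma subst_add: "subst \<sigma> (f + g) = subst \<sigma> f + subst \<sigma> (g :: 'k::ring_1 fa)"
proof -
  let ?S = "Poly_Mapping.keys f \<union> Poly_Mapping.keys g \<union> Poly_Mapping.keys (f+g)"
  have "subst \<sigma> (f+g) = (\<Sum>w\<in>?S. const (Poly_Mapping.lookup (f+g) w) * prod_list (map \<sigma> (letters w)))"
    by (rule subst_eq_sum) auto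
  also have "\<dots> = (\<Sum>w\<in>?S. const (Poly_Mapping.lookup f w) * prod_list (map \<sigma> (letters w)))
     + (\<Sum>w\<in>?S. const (Poly_Mapping.lookup g w) * prod_list (map \<sigma> (letters w)))"
    by (simp add: lookup_add const_add distrib_right sum.distrib)
  also have "\<dots> = subst \<sigma> f + subst \<sigma> g"
  proof -
    have "subst \<sigma> f = (\<Sum>w\<in>?S. const (Poly_Mapping.lookup f w) * prod_list (map \<sigma> (letters w)))"
      by (rule subst_eq_sum) auto
    moreover have "subst \<sigma> g = (\<Sum>w\<in>?S. const (Poly_Mapping.lookup g w) * prod_list (map \<sigma> (letters w)))"
      by (rule subst_eq_sum) auto
    ultimately show ?thesis by simp
  qed
  finally show ?thesis .
qed

lemma subst_zero[simp]: "subst \<sigma> 0 = 0" by (simp add: subst_def)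

lemma subst_single: "subst \<sigma> (Poly_Mapping.single w c) = const c * prod_list (map \<sigma> (letters w))"
  by (subst subst_eq_sum[of "{w}"]) auto

lemma subst_mult: "subst \<sigma> (f * g) = subst \<sigma> f * subst \<sigma> (g :: 'k::comm_ring_1 fa)"
proof (induction f rule: poly_mapping_add_single_induct)
  case zero then show ?case by simp
next
  case (add f w c)
  have "subst \<sigma> (Poly_Mapping.single w c * g) = subst \<sigma> (Poly_Mapping.single w c) * subst \<sigma> g"
  proof (induction g rule: poly_mapping_add_single_induct)
    case zero then show ?case by simp
  next
    case (add g u d)
    have "subst \<sigma> (Poly_Mapping.single w c * Poly_Mapping.single u d)
       = const c * prod_list (map \<sigma> (letters w)) * (const d * prod_list (map \<sigma> (letters u)))"
    proof -
      have "const d * prod_list (map \<sigma> (letters w)) = prod_list (map \<sigma> (letters w)) * const d"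
        by (rule const_comm)
      then show ?thesis by (simp add: mult_single subst_single const_mult) (metis mult.assoc)
    qed
    then show ?case using add by (simp add: distrib_left subst_add subst_single)
  qed
  then show ?case using add by (simp add: distrib_right subst_add)
qed

lemma subst_uminus: "subst \<sigma> (- f) = - subst \<sigma> (f :: 'k::ring_1 fa)"
  using subst_add[of \<sigma> f "-f"] by (simp add: eq_neg_iff_add_eq_0 add.commute)
lemma subst_diff: "subst \<sigma> (f - g) = subst \<sigma> f - subst \<sigma> (g :: 'k::ring_1 fa)"
  using subst_add[of \<sigma> f "-g"] by (simp add: subst_uminus)
lemma subst_const[simp]: "subst \<sigma> (const c) = const c"
  by (simp add: const_def subst_single)
lemma subst_one[simp]: "subst \<sigma> (1 :: 'k::ring_1 fa) = 1"
  using subst_const[of \<sigma> "1::'k"] by simp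
lemma subst_var[simp]: "subst \<sigma> (var v) = \<sigma> v"
  by (simp add: var_def subst_single)
lemma subst_prod_list: "subst \<sigma> (prod_list xs) = prod_list (map (subst \<sigma>) (xs :: 'k::comm_ring_1 fa list))"
  by (induction xs) (auto simp: subst_mult)
lemma subst_power: "subst \<sigma> (x ^ n) = subst \<sigma> (x :: 'k::comm_ring_1 fa) ^ n"
  by (induction n) (auto simp: subst_mult)
lemma subst_comm[simp]: "subst \<sigma> (comm a b) = comm (subst \<sigma> a) (subst \<sigma> (b :: 'k::comm_ring_1 fa))"
  by (simp add: comm_def subst_diff subst_mult)
lemma subst_jord[simp]: "subst \<sigma> (jord a b) = jord (subst \<sigma> a) (subst \<sigma> (b :: 'k::comm_ring_1 fa))"
  by (simp add: jord_def subst_add subst_mult)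
lemma subst_id: "subst var f = (f :: 'k::comm_ring_1 fa)"
proof (induction f rule: poly_mapping_add_single_induct)
  case (add f w c)
  have "const c * Poly_Mapping.single w 1 = Poly_Mapping.single w c"
    by (cases w) (simp add: const_def mult_single)
  then show ?case using add by (simp add: subst_add subst_single prod_var)
qed simp

lemma comm_add_right: "comm c (a + b) = comm c a + comm c (b :: 'a::ring)"
  by (simp add: comm_def algebra_simps)
lemma comm_sum_right: "comm c (sum f S) = (\<Sum>x\<in>S. comm c (f x :: 'a::ring))"
proof (induction S rule: infinite_finite_induct)
  case (insert x F) then show ?case by (simp add: comm_add_right)
qed (auto simp: comm_def)
lemma comm_antisym: "comm a b = - comm b (a :: 'a::ring)" by (simp add: comm_def)
lemma jord_commute: "jord a b = jord b (a :: 'a::ring)" by (simp add: jord_def add.commute)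

lemma jord_same: "jord (x::'k::comm_ring_1 fa) x = const 2 * x ^ 2"
proof -
  have "const (2::'k) = 1 + 1" by (simp only: one_add_one[symmetric] const_add const_1)
  then show ?thesis unfolding jord_def power2_eq_square by (simp only: distrib_right mult_1_left)
qed

abbreviation prod_upto :: "(nat \<Rightarrow> 'a::monoid_mult) \<Rightarrow> nat \<Rightarrow> 'a" where
  "prod_upto f m \<equiv> prod_list (map f [0..<m])"

lemma prod_upto_split: "a \<le> b \<Longrightarrow> prod_upto f b = prod_upto f a * prod_list (map f [a..<b])"
proof -
  assume "a \<le> b"
  then have "[0..<b] = [0..<a] @ [a..<b]" using upt_add_eq_append[of 0 a "b-a"] by simp
  then show ?thesis by simp
qed

lemma prod_upto_split1: "t < m \<Longrightarrow> prod_upto f m = prod_upto f t * f t * prod_list (map f [Suc t..<m])"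
proof -
  assume "t < m"
  then have "[0..<m] = [0..<t] @ [t..<m]" using upt_add_eq_append[of 0 t "m-t"] by simp
  also have "[t..<m] = t # [Suc t..<m]" using \<open>t < m\<close> by (simp add: upt_conv_Cons)
  finally have "[0..<m] = [0..<t] @ t # [Suc t..<m]" .
  then show ?thesis by (simp add: mult.assoc)
qed

lemma prod_upto_split2: "Suc t < m \<Longrightarrow> prod_upto f m = prod_upto f t * (f t * f (Suc t)) * prod_list (map f [Suc (Suc t)..<m])"
proof -
  assume "Suc t < m"
  then have "[0..<m] = [0..<t] @ [t..<m]" using upt_add_eq_append[of 0 t "m-t"] by simp
  also have "[t..<m] = t # Suc t # [Suc (Suc t)..<m]" using \<open>Suc t < m\<close> by (simp add: upt_conv_Cons)
  finally have "[0..<m] = [0..<t] @ t # Suc t # [Suc (Suc t)..<m]" .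
  then show ?thesis by (simp add: mult.assoc)
qed

lemma prod_upto_Suc: "prod_upto f (Suc m) = prod_upto f m * f m" by simp
lemma prod_upto_Suc_shift: "prod_upto f (Suc m) = f 0 * prod_upto (\<lambda>t. f (Suc t)) m"
  by (induction m) (simp_all add: mult.assoc[symmetric])

lemma prod_upto_cong: "(\<And>t. t < a \<Longrightarrow> f t = g t) \<Longrightarrow> prod_upto f a = prod_upto g a"
  by (intro arg_cong[where f=prod_list] map_cong) auto

section \<open>Congruence modulo \<open>I\<^sub>p\<close>\<close>

lemma Ip_gen: "g \<in> Ip_gens p \<Longrightarrow> g \<in> Ip p" by (simp add: Ip_def T2_ideal.gen)
lemma Ip_zero[simp]: "0 \<in> Ip p" by (simp add: Ip_def T2_ideal.zero)
lemma Ip_add: "a \<in> Ip p \<Longrightarrow> b \<in> Ip p \<Longrightarrow> a + b \<in> Ip p" by (simp add: Ip_def T2_ideal.add)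
lemma Ip_lmult: "a \<in> Ip p \<Longrightarrow> x * a \<in> Ip p" by (simp add: Ip_def T2_ideal.lmult)
lemma Ip_rmult: "a \<in> Ip p \<Longrightarrow> a * x \<in> Ip p" by (simp add: Ip_def T2_ideal.rmult)
lemma Ip_endo: "a \<in> Ip p \<Longrightarrow> graded_subst \<sigma> \<Longrightarrow> subst \<sigma> a \<in> Ip p"
  by (simp add: Ip_def T2_ideal.endo)
lemma Ip_uminus: "a \<in> Ip p \<Longrightarrow> - a \<in> Ip p"
  using Ip_lmult[of a p "-1"] by simp
lemma Ip_diff: "a \<in> Ip p \<Longrightarrow> b \<in> Ip p \<Longrightarrow> a - b \<in> Ip p"
  using Ip_add[of a p "-b"] Ip_uminus[of b p] by simp
lemma Ip_sum: "(\<And>x. x \<in> S \<Longrightarrow> f x \<in> Ip p) \<Longrightarrow> sum f S \<in> Ip p"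
  by (induction S rule: infinite_finite_induct) (auto intro: Ip_add)
lemma Ip_uminus_iff: "- a \<in> Ip p \<longleftrightarrow> a \<in> Ip p"
  using Ip_uminus[of a p] Ip_uminus[of "-a" p] by auto

lemma Ip_cancel_two: "(2::'k::field) \<noteq> 0 \<Longrightarrow> X + X \<in> Ip p \<Longrightarrow> (X :: 'k fa) \<in> Ip p"
proof -
  assume h: "(2::'k) \<noteq> 0" "X + X \<in> Ip p"
  have "const (1/2) * (X + X) \<in> Ip p" using h(2) by (rule Ip_lmult)
  moreover have e: "X + X = const (1+1) * X" by (simp only: const_add const_1 distrib_right mult_1_left)
  have "const (1/2) * (X + X) = const ((1/2) * (1+1)) * X"
    by (simp only: e const_mult mult.assoc)
  moreover have "(1/2) * (1+1) = (1::'k)" using h(1) by simp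
  ultimately show ?thesis by simp
qed

definition cong_Ip :: "nat \<Rightarrow> 'k::comm_ring_1 fa \<Rightarrow> 'k fa \<Rightarrow> bool" where
  "cong_Ip p a b \<longleftrightarrow> a - b \<in> Ip p"

lemma cong_Ip_refl[simp]: "cong_Ip p a a" by (simp add: cong_Ip_def)
lemma cong_Ip_sym: "cong_Ip p a b \<Longrightarrow> cong_Ip p b a"
  unfolding cong_Ip_def using Ip_uminus by fastforce
lemma cong_Ip_trans[trans]: "cong_Ip p a b \<Longrightarrow> cong_Ip p b c \<Longrightarrow> cong_Ip p a c"
  unfolding cong_Ip_def using Ip_add by fastforce
lemma cong_Ip_uminus: "cong_Ip p a b \<Longrightarrow> cong_Ip p (- a) (- b)"
  unfolding cong_Ip_def using Ip_uminus by (fastforce simp: algebra_simps)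
lemma cong_Ip_lmult: "cong_Ip p a b \<Longrightarrow> cong_Ip p (x * a) (x * b)"
  unfolding cong_Ip_def using Ip_lmult by (fastforce simp: algebra_simps)
lemma cong_Ip_rmult: "cong_Ip p a b \<Longrightarrow> cong_Ip p (a * x) (b * x)"
  unfolding cong_Ip_def using Ip_rmult by (fastforce simp: algebra_simps)
lemma cong_Ip_Ip: "cong_Ip p a b \<Longrightarrow> b \<in> Ip p \<Longrightarrow> a \<in> Ip p"
  unfolding cong_Ip_def using Ip_add by fastforce

lemma cong_Ip_neg_if_sum: "X + Y \<in> Ip p \<Longrightarrow> cong_Ip p Y (const (-1) * (X :: 'k::comm_ring_1 fa))"
  by (simp add: cong_Ip_def const_uminus add.commute)
lemma cong_Ip_if_diff: "X - Y \<in> Ip p \<Longrightarrow> cong_Ip p Y (const 1 * (X :: 'k::comm_ring_1 fa))"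
  unfolding cong_Ip_def using Ip_uminus by fastforce

lemma cong_Ip_scaled_mult: "cong_Ip p X (const e * Y) \<Longrightarrow> cong_Ip p (L * X * R) (const e * (L * Y * (R :: 'k::comm_ring_1 fa)))"
proof -
  assume "cong_Ip p X (const e * Y)"
  then have "cong_Ip p (L * X * R) (L * (const e * Y) * R)" by (intro cong_Ip_rmult cong_Ip_lmult)
  also have "L * (const e * Y) * R = const e * (L * Y * R)"
    by (metis const_comm mult.assoc)
  finally show ?thesis .
qed

lemma cong_Ip_scaled_rmult: "cong_Ip p X (const e * Y) \<Longrightarrow> cong_Ip p (X * Z) (const e * (Y * (Z :: 'k::comm_ring_1 fa)))"
  using cong_Ip_rmult[of p X "const e * Y" Z] by (simp add: mult.assoc)
lemma cong_Ip_scaled_lmult: "cong_Ip p X (const e * Y) \<Longrightarrow> cong_Ip p (Z * X) (const e * (Z * (Y :: 'k::comm_ring_1 fa)))"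
  using cong_Ip_scaled_mult[of p X e Y Z 1] by simp

lemma cong_Ip_prod_upto_single:
  assumes "t < m" "\<And>s. s < m \<Longrightarrow> s \<noteq> t \<Longrightarrow> g s = f s" "cong_Ip p (g t) (const e * f t)"
  shows "cong_Ip p (prod_upto g m) (const e * prod_upto f (m::nat))"
proof -
  have L: "prod_upto g t = prod_upto f t" using assms by (intro arg_cong[where f=prod_list] map_cong) auto
  have R: "prod_list (map g [Suc t..<m]) = prod_list (map f [Suc t..<m])"
    using assms by (intro arg_cong[where f=prod_list] map_cong) auto
  show ?thesis unfolding prod_upto_split1[OF assms(1), of g] prod_upto_split1[OF assms(1), of f] L R
    by (rule cong_Ip_scaled_mult) (rule assms(3))
qed

lemma cong_Ip_prod_upto_pair:
  assumes "Suc t < m" "\<And>s. s < m \<Longrightarrow> s \<noteq> t \<Longrightarrow> s \<noteq> Suc t \<Longrightarrow> g s = f s"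
    "cong_Ip p (g t * g (Suc t)) (const e * (f t * f (Suc t)))"
  shows "cong_Ip p (prod_upto g m) (const e * prod_upto f (m::nat))"
proof -
  have L: "prod_upto g t = prod_upto f t" using assms by (intro arg_cong[where f=prod_list] map_cong) auto
  have R: "prod_list (map g [Suc (Suc t)..<m]) = prod_list (map f [Suc (Suc t)..<m])"
    using assms by (intro arg_cong[where f=prod_list] map_cong) auto
  show ?thesis unfolding prod_upto_split2[OF assms(1), of g] prod_upto_split2[OF assms(1), of f] L R
    by (rule cong_Ip_scaled_mult) (rule assms(3))
qed

lemma cong_Ip_prod_upto_seam:
  assumes "\<And>s. s < M \<Longrightarrow> g s = f s" "\<And>s. s < N \<Longrightarrow> k (Suc s) = h (Suc s)"
    "cong_Ip p (g M * k 0) (const e * (f M * h 0))"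
  shows "cong_Ip p (prod_upto g (Suc M) * prod_upto k (Suc N)) (const e * (prod_upto f (Suc M) * prod_upto h (Suc N)))"
proof -
  have L: "prod_upto g M = prod_upto f M" using assms by (intro arg_cong[where f=prod_list] map_cong) auto
  have R: "prod_upto (\<lambda>t. k (Suc t)) N = prod_upto (\<lambda>t. h (Suc t)) N"
    using assms by (intro arg_cong[where f=prod_list] map_cong) auto
  have "prod_upto g (Suc M) * prod_upto k (Suc N) = prod_upto g M * (g M * k 0) * prod_upto (\<lambda>t. k (Suc t)) N"
    by (simp only: prod_upto_Suc[of g M] prod_upto_Suc_shift[of k N] mult.assoc)
  moreover have "prod_upto f (Suc M) * prod_upto h (Suc N) = prod_upto f M * (f M * h 0) * prod_upto (\<lambda>t. h (Suc t)) N"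
    by (simp only: prod_upto_Suc[of f M] prod_upto_Suc_shift[of h N] mult.assoc)
  ultimately show ?thesis using cong_Ip_scaled_mult[OF assms(3)] L R by simp
qed

inductive_set span_Ip :: "nat \<Rightarrow> 'k::comm_ring_1 fa set \<Rightarrow> 'k fa set" for p S where
  span_Ip_ideal: "f \<in> Ip p \<Longrightarrow> f \<in> span_Ip p S"
| span_Ip_gen: "g \<in> S \<Longrightarrow> g \<in> span_Ip p S"
| span_Ip_add: "f \<in> span_Ip p S \<Longrightarrow> g \<in> span_Ip p S \<Longrightarrow> f + g \<in> span_Ip p S"
| span_Ip_smult: "f \<in> span_Ip p S \<Longrightarrow> const c * f \<in> span_Ip p S"

lemma span_Ip_cong: "cong_Ip p f g \<Longrightarrow> g \<in> span_Ip p S \<Longrightarrow> f \<in> span_Ip p S"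
proof -
  assume "cong_Ip p f g" "g \<in> span_Ip p S"
  then have "(f - g) + g \<in> span_Ip p S" by (intro span_Ip_add[OF span_Ip_ideal]) (simp_all add: cong_Ip_def)
  then show ?thesis by simp
qed

lemma span_Ip_uminus: "f \<in> span_Ip p S \<Longrightarrow> - f \<in> span_Ip p S"
  using span_Ip_smult[of f p S "-1"] by (simp add: const_uminus)
lemma span_Ip_diff: "f \<in> span_Ip p S \<Longrightarrow> g \<in> span_Ip p S \<Longrightarrow> f - g \<in> span_Ip p S"
  using span_Ip_add[of f p S "-g"] span_Ip_uminus[of g p S] by simp

lemma span_Ip_rmult:
  assumes "f \<in> span_Ip p S" "\<And>g. g \<in> S \<Longrightarrow> g * x \<in> span_Ip p T"
  shows "f * x \<in> span_Ip p T"
  using assms(1)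
proof induction
  case (span_Ip_ideal f) then show ?case by (intro span_Ip.span_Ip_ideal Ip_rmult)
next
  case (span_Ip_gen g) then show ?case by (rule assms(2))
next
  case (span_Ip_add f g) then show ?case by (simp add: distrib_right span_Ip.span_Ip_add)
next
  case (span_Ip_smult f c) then show ?case by (simp add: mult.assoc span_Ip.span_Ip_smult)
qed

lemma span_Ip_lmult:
  assumes "f \<in> span_Ip p S" "\<And>g. g \<in> S \<Longrightarrow> x * g \<in> span_Ip p T"
  shows "x * f \<in> span_Ip p T"
  using assms(1)
proof induction
  case (span_Ip_ideal f) then show ?case by (intro span_Ip.span_Ip_ideal Ip_lmult)
next
  case (span_Ip_gen g) then show ?case by (rule assms(2))
next
  case (span_Ip_add f g) then show ?case by (simp add: distrib_left span_Ip.span_Ip_add)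
next
  case (span_Ip_smult f c)
  have "x * (const c * f) = const c * (x * f)" by (metis const_comm mult.assoc)
  then show ?case using span_Ip_smult by (simp add: span_Ip.span_Ip_smult)
qed

lemma span_Ip_trans: "f \<in> span_Ip p S \<Longrightarrow> S \<subseteq> span_Ip p T \<Longrightarrow> f \<in> span_Ip p T"
  using span_Ip_rmult[of f p S 1 T] by auto

lemma span_Ip_mono: "f \<in> span_Ip p S \<Longrightarrow> S \<subseteq> T \<Longrightarrow> f \<in> span_Ip p T"
  by (erule span_Ip_trans) (auto intro: span_Ip_gen)

lemma span_Ip_explicit:
  "f \<in> span_Ip p S \<Longrightarrow> \<exists>cs gs. set gs \<subseteq> S \<and> length cs = length gs \<and>
      f - sum_list (map2 (\<lambda>c g. const c * g) cs gs) \<in> Ip p"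
proof (induction rule: span_Ip.induct)
  case (span_Ip_ideal f) then show ?case by (intro exI[of _ "[]"]) auto
next
  case (span_Ip_gen g)
  have "g - sum_list (map2 (\<lambda>c g. const c * g) [1] [g]) = 0" by simp
  then show ?case using span_Ip_gen by (intro exI[of _ "[1]"] exI[of _ "[g]"]) auto
next
  case (span_Ip_add f g)
  then obtain cs gs ds hs where a: "set gs \<subseteq> S" "length cs = length gs"
      "f - sum_list (map2 (\<lambda>c g. const c * g) cs gs) \<in> Ip p"
    and b: "set hs \<subseteq> S" "length ds = length hs" "g - sum_list (map2 (\<lambda>c g. const c * g) ds hs) \<in> Ip p"
    by blast
  have "map2 (\<lambda>c g. const c * g) (cs @ ds) (gs @ hs) = map2 (\<lambda>c g. const c * g) cs gs @ map2 (\<lambda>c g. const c * g) ds hs"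
    using a(2) by simp
  then have eq: "f + g - sum_list (map2 (\<lambda>c g. const c * g) (cs @ ds) (gs @ hs))
     = (f - sum_list (map2 (\<lambda>c g. const c * g) cs gs)) + (g - sum_list (map2 (\<lambda>c g. const c * g) ds hs))"
    by simp
  have "f + g - sum_list (map2 (\<lambda>c g. const c * g) (cs @ ds) (gs @ hs)) \<in> Ip p"
    unfolding eq by (rule Ip_add[OF a(3) b(3)])
  then show ?case using a b by (intro exI[of _ "cs @ ds"] exI[of _ "gs @ hs"]) auto
next
  case (span_Ip_smult f c)
  then obtain cs gs where a: "set gs \<subseteq> S" "length cs = length gs"
      "f - sum_list (map2 (\<lambda>c g. const c * g) cs gs) \<in> Ip p" by blast
  have "sum_list (map2 (\<lambda>c g. const c * g) (map ((*) c) cs) gs) = const c * sum_list (map2 (\<lambda>c g. const c * g) cs gs)"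
    using a(2)
  proof (induction cs gs rule: list_induct2)
    case Nil then show ?case by simp
  next
    case (Cons x xs y ys) then show ?case by (simp add: const_mult distrib_left mult.assoc)
  qed
  then have "const c * f - sum_list (map2 (\<lambda>c g. const c * g) (map ((*) c) cs) gs)
      = const c * (f - sum_list (map2 (\<lambda>c g. const c * g) cs gs))" by (simp add: right_diff_distrib)
  then show ?case using a by (intro exI[of _ "map ((*) c) cs"] exI[of _ gs]) (auto intro: Ip_lmult)
qed

section \<open>Consequences of the defining identities\<close>

definition rename_vars :: "(nat \<Rightarrow> nat) \<Rightarrow> (nat \<Rightarrow> nat) \<Rightarrow> var \<Rightarrow> 'k::comm_ring_1 fa" where
  "rename_vars fy fz v = (case v of Yv i \<Rightarrow> yv (fy i) | Zv i \<Rightarrow> zv (fz i))"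

lemma keys_var: "Poly_Mapping.keys (var v :: 'k::comm_ring_1 fa) = {Word [v]}"
  by (simp add: var_def)

lemma graded_rename_vars: "graded_subst (rename_vars fy fz :: var \<Rightarrow> 'k::comm_ring_1 fa)"
  by (simp add: graded_subst_def homog_def rename_vars_def keys_var zcount_def)

lemma rename_vars_Yv[simp]: "rename_vars fy fz (Yv i) = (yv (fy i) :: 'k::comm_ring_1 fa)" by (simp add: rename_vars_def)
lemma rename_vars_Zv[simp]: "rename_vars fy fz (Zv i) = (zv (fz i) :: 'k::comm_ring_1 fa)" by (simp add: rename_vars_def)

lemma Ip_gens_renamed: "(g :: 'k::comm_ring_1 fa) \<in> Ip_gens p \<Longrightarrow> subst (rename_vars fy fz) g \<in> Ip p"
  by (intro Ip_endo Ip_gen graded_rename_vars)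

lemma Ip_comm_yy_y: "comm (comm (yv a) (yv b)) (yv c) \<in> (Ip p :: 'k::comm_ring_1 fa set)"
proof -
  have "lcomm (yv 1) [yv 2, yv 3] \<in> (Ip_gens p :: 'k fa set)" by (simp add: Ip_gens_def)
  from Ip_gens_renamed[OF this, of "\<lambda>i. if i = 1 then a else if i = 2 then b else c" id]
  show ?thesis by (simp add: lcomm_def)
qed

lemma Ip_comm_yy_z: "comm (comm (yv a) (yv b)) (zv c) \<in> (Ip p :: 'k::comm_ring_1 fa set)"
proof -
  have "lcomm (yv 1) [yv 2, zv 3] \<in> (Ip_gens p :: 'k fa set)" by (simp add: Ip_gens_def)
  from Ip_gens_renamed[OF this, of "\<lambda>i. if i = 1 then a else b" "\<lambda>_. c"]
  show ?thesis by (simp add: lcomm_def)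
qed

lemma Ip_comm_yz_y: "comm (comm (yv a) (zv b)) (yv c) \<in> (Ip p :: 'k::comm_ring_1 fa set)"
proof -
  have "lcomm (yv 1) [zv 2, yv 3] \<in> (Ip_gens p :: 'k fa set)" by (simp add: Ip_gens_def)
  from Ip_gens_renamed[OF this, of "\<lambda>i. if i = 1 then a else c" "\<lambda>_. b"]
  show ?thesis by (simp add: lcomm_def)
qed

lemma Ip_jord_yz_z: "jord (comm (yv a) (zv b)) (zv c) \<in> (Ip p :: 'k::comm_ring_1 fa set)"
proof -
  have "jord (comm (yv 1) (zv 2)) (zv 3) \<in> (Ip_gens p :: 'k fa set)" by (simp add: Ip_gens_def)
  from Ip_gens_renamed[OF this, of "\<lambda>_. a" "\<lambda>i. if i = 2 then b else c"]
  show ?thesis by simp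
qed

lemma Ip_comm_jord_z: "comm (jord (zv a) (zv b)) (zv c) \<in> (Ip p :: 'k::comm_ring_1 fa set)"
proof -
  have "comm (jord (zv 1) (zv 2)) (zv 3) \<in> (Ip_gens p :: 'k fa set)" by (simp add: Ip_gens_def)
  from Ip_gens_renamed[OF this, of id "\<lambda>i. if i = 1 then a else if i = 2 then b else c"]
  show ?thesis by simp
qed

lemma Ip_jord_exchange: "jord (zv a) (zv b) * jord (zv c) (zv d) - jord (zv a) (zv c) * jord (zv b) (zv d) \<in> (Ip p :: 'k::comm_ring_1 fa set)"
proof -
  have "jord (zv 1) (zv 2) * jord (zv 3) (zv 4) - jord (zv 1) (zv 3) * jord (zv 2) (zv 4) \<in> (Ip_gens p :: 'k fa set)"
    by (simp add: Ip_gens_def)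
  from Ip_gens_renamed[OF this, of id "\<lambda>i. if i = 1 then a else if i = 2 then b else if i = 3 then c else d"]
  show ?thesis by (simp add: subst_diff subst_mult)
qed

lemma exchange_in_Ip_gens: "x1 \<in> {yv 1, zv 1} \<Longrightarrow> x4 \<in> {yv 4, zv 4} \<Longrightarrow>
   comm x1 (yv 2) * comm (yv 3) x4 + comm x1 (yv 3) * comm (yv 2) x4 \<in> (Ip_gens p :: 'k::comm_ring_1 fa set)"
  unfolding Ip_gens_def by blast

definition pick4 :: "nat \<Rightarrow> nat \<Rightarrow> nat \<Rightarrow> nat \<Rightarrow> nat \<Rightarrow> nat" where
  "pick4 a b c d i = (if i = 1 then a else if i = 2 then b else if i = 3 then c else d)"
lemma pick4_simps[simp]: "pick4 a b c d (Suc 0) = a" "pick4 a b c d 2 = b" "pick4 a b c d 3 = c" "pick4 a b c d 4 = d"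
  by (simp_all add: pick4_def)

lemma Ip_yy_exchange: "comm (yv a) (yv b) * comm (yv c) (yv d) + comm (yv a) (yv c) * comm (yv b) (yv d) \<in> (Ip p :: 'k::comm_ring_1 fa set)"
  using Ip_gens_renamed[OF exchange_in_Ip_gens[of "yv 1" "yv 4"], of "pick4 a b c d" id] by (simp add: subst_add subst_mult)
lemma Ip_yy_yz_exchange: "comm (yv a) (yv b) * comm (yv c) (zv d) + comm (yv a) (yv c) * comm (yv b) (zv d) \<in> (Ip p :: 'k::comm_ring_1 fa set)"
  using Ip_gens_renamed[OF exchange_in_Ip_gens[of "yv 1" "zv 4"], of "pick4 a b c d" "\<lambda>_. d"] by (simp add: subst_add subst_mult)
lemma Ip_zy_yz_exchange: "comm (zv a) (yv b) * comm (yv c) (zv d) + comm (zv a) (yv c) * comm (yv b) (zv d) \<in> (Ip p :: 'k::comm_ring_1 fa set)"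
  using Ip_gens_renamed[OF exchange_in_Ip_gens[of "zv 1" "zv 4"], of "pick4 a b c d" "pick4 a b c d"] by (simp add: subst_add subst_mult)

lemma Ip_yz_jord_exchange: "comm (yv a) (zv b) * jord (zv c) (zv d) - comm (yv a) (zv c) * jord (zv b) (zv d) \<in> (Ip p :: 'k::comm_ring_1 fa set)"
proof -
  have "comm (yv 1) (zv 2) * jord (zv 3) (zv 4) - comm (yv 1) (zv 3) * jord (zv 2) (zv 4) \<in> (Ip_gens p :: 'k fa set)"
    by (simp add: Ip_gens_def)
  from Ip_gens_renamed[OF this, of "\<lambda>_. a" "pick4 a b c d"]
  show ?thesis by (simp add: subst_diff subst_mult)
qed

lemma Ip_yz_power_jord: assumes "k \<ge> 1" "2*n + 2*k - 1 = p"
  shows "prod_upto (\<lambda>t. comm (yv (g t)) (zv c)) (2*k-2) * jord (zv e) (zv c) * zv c ^ (2*n) \<in> (Ip p :: 'k::comm_ring_1 fa set)"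
proof -
  have "prod_list (map (\<lambda>t. comm (yv (t+1)) (zv 1)) [0..<2*k-2]) * jord (zv 2) (zv 1) * zv 1 ^ (2*n)
     \<in> (Ip_gens p :: 'k fa set)"
    unfolding Ip_gens_def using assms by blast
  from Ip_gens_renamed[OF this, of "\<lambda>i. g (i - 1)" "\<lambda>i. if i = 1 then c else e"]
  show ?thesis by (simp add: subst_mult subst_prod_list subst_power o_def)
qed

lemma Ip_yz_power: assumes "k \<ge> 1" "2*n + 2*k - 1 = p"
  shows "prod_upto (\<lambda>t. comm (yv (g t)) (zv c)) (2*k-1) * zv c ^ (2*n) \<in> (Ip p :: 'k::comm_ring_1 fa set)"
proof -
  have "prod_list (map (\<lambda>t. comm (yv (t+1)) (zv 1)) [0..<2*k-1]) * zv 1 ^ (2*n)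
     \<in> (Ip_gens p :: 'k fa set)"
    unfolding Ip_gens_def using assms by blast
  from Ip_gens_renamed[OF this, of "\<lambda>i. g (i - 1)" "\<lambda>i. c"]
  show ?thesis by (simp add: subst_mult subst_prod_list subst_power o_def)
qed

definition central :: "nat \<Rightarrow> 'k::comm_ring_1 fa \<Rightarrow> bool" where
  "central p c \<longleftrightarrow> (\<forall>x. comm c x \<in> Ip p)"

lemma Ip_comm_prod_vars: "(\<And>v. comm c (var v) \<in> Ip p) \<Longrightarrow> comm c (prod_list (map var ws)) \<in> (Ip p :: 'k::comm_ring_1 fa set)"
proof (induction ws)
  case Nil then show ?case by (simp add: comm_def)
next
  case (Cons v ws)
  have "comm c (prod_list (map var (v # ws))) = comm c (var v) * prod_list (map var ws) + var v * comm c (prod_list (map var ws))"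
    by (simp add: comm_def algebra_simps)
  then show ?case using Cons by (metis Ip_add Ip_lmult Ip_rmult)
qed

lemma central_if_comm_vars:
  assumes "\<And>v. comm c (var v) \<in> Ip p"
  shows "central p (c :: 'k::comm_ring_1 fa)"
  unfolding central_def
proof
  fix x :: "'k fa"
  have "comm c x = comm c (subst var x)" by (simp add: subst_id)
  also have "\<dots> = (\<Sum>w\<in>Poly_Mapping.keys x. comm c (const (Poly_Mapping.lookup x w) * prod_list (map var (letters w))))"
    by (simp add: subst_def comm_sum_right)
  finally have eq: "comm c x = \<dots>" .
  have "comm c (const d * prod_list (map var ws)) = const d * comm c (prod_list (map var ws))" for d ws
  proof -
    have "c * const d = const d * c" by (simp add: const_comm)
    then show ?thesis by (simp add: comm_def algebra_simps) (metis mult.assoc)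
  qed
  then show "comm c x \<in> Ip p" unfolding eq using Ip_comm_prod_vars[OF assms]
    by (auto intro!: Ip_sum Ip_lmult)
qed

lemma central_mult: "central p c \<Longrightarrow> central p d \<Longrightarrow> central p (c * d)"
proof -
  assume a: "central p c" "central p d"
  have "comm (c * d) x = c * comm d x + comm c x * d" for x by (simp add: comm_def algebra_simps)
  then show ?thesis using a unfolding central_def by (metis Ip_add Ip_lmult Ip_rmult)
qed

lemma central_one: "central p (1 :: 'k::comm_ring_1 fa)" by (simp add: central_def comm_def)

lemma central_prod_upto: "(\<And>t. t < m \<Longrightarrow> central p (f t)) \<Longrightarrow> central p (prod_upto f m)"
  by (induction m) (auto simp: central_one central_mult)

lemma central_cong_Ip: "central p c \<Longrightarrow> cong_Ip p (x * c) (c * x)"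
  unfolding central_def cong_Ip_def comm_def by (metis Ip_uminus minus_diff_eq)

lemma central_comm_yy: "central p (comm (yv a) (yv b) :: 'k::comm_ring_1 fa)"
proof (rule central_if_comm_vars)
  fix v show "comm (comm (yv a) (yv b)) (var v) \<in> (Ip p :: 'k fa set)"
    by (cases v) (auto intro: Ip_comm_yy_y Ip_comm_yy_z)
qed

lemma comm_jord_y: "comm (jord (zv a) (zv b)) (yv c) = - (jord (comm (yv c) (zv a)) (zv b) + jord (comm (yv c) (zv b)) (zv a) :: 'k::comm_ring_1 fa)"
  by (simp add: comm_def jord_def algebra_simps)

lemma central_jord_zz: "central p (jord (zv a) (zv b) :: 'k::comm_ring_1 fa)"
proof (rule central_if_comm_vars)
  fix v show "comm (jord (zv a) (zv b)) (var v) \<in> (Ip p :: 'k fa set)"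
  proof (cases v)
    case (Yv c)
    have "comm (jord (zv a) (zv b)) (yv c) \<in> (Ip p :: 'k fa set)"
      unfolding comm_jord_y by (simp only: Ip_uminus_iff) (intro Ip_add Ip_jord_yz_z)
    then show ?thesis using Yv by simp
  next
    case (Zv c) then show ?thesis by (simp add: Ip_comm_jord_z)
  qed
qed

lemma jord_comm_expand: "jord (A::'k::comm_ring_1 fa) (comm y z) = y * jord A z + comm A y * z + z * comm A y - jord A z * y"
  by (simp add: comm_def jord_def algebra_simps)

lemma Ip_jord_yz_yz: "jord (comm (yv a) (zv b)) (comm (yv c) (zv d)) \<in> (Ip p :: 'k::comm_ring_1 fa set)"
  unfolding jord_comm_expand by (intro Ip_add Ip_diff Ip_lmult Ip_rmult Ip_comm_yz_y Ip_jord_yz_z)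

lemma cong_Ip_anticomm: "jord A B \<in> Ip p \<Longrightarrow> cong_Ip p (A * B) (- (B * (A::'k::comm_ring_1 fa)))"
  by (simp add: cong_Ip_def jord_def)

lemma cong_Ip_yz_z: "cong_Ip p (comm (yv a) (zv b) * zv c) (- (zv c * comm (yv a) (zv b) :: 'k::comm_ring_1 fa))"
  by (rule cong_Ip_anticomm, rule Ip_jord_yz_z)

lemma cong_Ip_yz_zs: "cong_Ip p (comm (yv a) (zv b) * prod_list (map zv ks))
    (const ((-1) ^ length ks) * (prod_list (map zv ks) * comm (yv a) (zv b)) :: 'k::comm_ring_1 fa)"
proof (induction ks)
  case Nil then show ?case by simp
next
  case (Cons k ks)
  let ?A = "comm (yv a) (zv b) :: 'k fa"
  have "?A * prod_list (map zv (k # ks)) = (?A * zv k) * prod_list (map zv ks)" by (simp add: mult.assoc)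
  also have "cong_Ip p \<dots> ((- (zv k * ?A)) * prod_list (map zv ks))"
    by (rule cong_Ip_rmult, rule cong_Ip_yz_z)
  also have "\<dots> = - (zv k * (?A * prod_list (map zv ks)))" by (simp add: mult.assoc)
  also have "cong_Ip p \<dots> (- (zv k * (const ((-1) ^ length ks) * (prod_list (map zv ks) * ?A))))"
    by (rule cong_Ip_uminus, rule cong_Ip_lmult, rule Cons)
  also have "\<dots> = const ((-1) ^ length (k # ks)) * (prod_list (map zv (k # ks)) * ?A)"
  proof -
    have "zv k * const ((-1) ^ length ks) = const ((-1) ^ length ks) * (zv k :: 'k fa)"
      by (simp add: const_comm)
    then show ?thesis by (simp add: const_mult const_uminus mult.assoc[symmetric])
  qed
  finally show ?case .
qed

section \<open>Sorting up to sign\<close>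

definition swap_adj :: "nat \<Rightarrow> 'a list \<Rightarrow> 'a list" where
  "swap_adj i xs = xs[i := xs ! Suc i, Suc i := xs ! i]"

lemma length_swap_adj[simp]: "length (swap_adj i xs) = length xs" by (simp add: swap_adj_def)
lemma nth_swap_adj: "Suc i < length xs \<Longrightarrow>
  swap_adj i xs ! k = (if k = i then xs ! Suc i else if k = Suc i then xs ! i else xs ! k)"
  by (simp add: swap_adj_def nth_list_update)

lemma swap_adj_Cons: "swap_adj (Suc i) (y # zs) = y # swap_adj i zs" by (simp add: swap_adj_def)

lemma swap_adj_same: "xs ! i = xs ! Suc i \<Longrightarrow> swap_adj i xs = xs"
  unfolding swap_adj_def by (metis list_update_id)

lemma swap_adj_move_to_front:
  assumes "Suc j < length xs"
  shows "swap_adj j xs ! j # take j (swap_adj j xs) @ drop (Suc j) (swap_adj j xs) = xs ! Suc j # take (Suc j) xs @ drop (Suc (Suc j)) xs"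
proof -
  have a: "swap_adj j xs ! j = xs ! Suc j" using assms by (simp add: nth_swap_adj)
  have b: "take j (swap_adj j xs) = take j xs" by (simp add: swap_adj_def)
  have c: "drop (Suc j) (swap_adj j xs) = xs ! j # drop (Suc (Suc j)) xs"
  proof -
    have "drop (Suc j) (swap_adj j xs) = drop (Suc j) (xs[Suc j := xs ! j])"
      by (simp add: swap_adj_def drop_update_cancel list_update_swap[of j "Suc j"])
    also have "\<dots> = xs ! j # drop (Suc (Suc j)) xs"
      using assms by (simp add: upd_conv_take_nth_drop)
    finally show ?thesis .
  qed
  have d: "take (Suc j) xs = take j xs @ [xs ! j]" using assms by (simp add: take_Suc_conv_app_nth)
  show ?thesis using a b c d by simp
qed

definition swap_sign :: "nat \<Rightarrow> 'k::comm_ring_1 \<Rightarrow> nat \<Rightarrow> (nat list \<Rightarrow> 'k fa) \<Rightarrow> bool" where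
  "swap_sign p s L F \<longleftrightarrow> (\<forall>xs i. length xs = L \<longrightarrow> Suc i < L \<longrightarrow> cong_Ip p (F (swap_adj i xs)) (const s * F xs))"

lemma cong_Ip_move_to_front:
  assumes sp: "swap_sign p s L F" and ss: "s * s = 1"
  shows "length xs = L \<Longrightarrow> j < L \<Longrightarrow> \<exists>k. cong_Ip p (F xs) (const (s ^ k) * F (xs ! j # take j xs @ drop (Suc j) xs))"
proof (induction j arbitrary: xs)
  case 0
  then have "xs = xs ! 0 # drop (Suc 0) xs" by (cases xs) auto
  then have "cong_Ip p (F xs) (const (s ^ 0) * F (xs ! 0 # take 0 xs @ drop (Suc 0) xs))" by simp
  then show ?case by blast
next
  case (Suc j)
  let ?xs = "swap_adj j xs"
  have l: "length ?xs = L" using Suc by simp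
  obtain k where k: "cong_Ip p (F ?xs) (const (s ^ k) * F (?xs ! j # take j ?xs @ drop (Suc j) ?xs))"
    using Suc.IH[OF l] Suc.prems by auto
  have sw: "cong_Ip p (F ?xs) (const s * F xs)" using sp Suc.prems unfolding swap_sign_def by auto
  have "F xs = const s * (const s * F xs)" using ss by (simp add: mult.assoc[symmetric] const_mult[symmetric])
  also have "cong_Ip p \<dots> (const s * F ?xs)" by (rule cong_Ip_lmult, rule cong_Ip_sym, rule sw)
  also have "cong_Ip p \<dots> (const s * (const (s ^ k) * F (?xs ! j # take j ?xs @ drop (Suc j) ?xs)))"
    by (rule cong_Ip_lmult, rule k)
  also have "\<dots> = const (s ^ Suc k) * F (xs ! Suc j # take (Suc j) xs @ drop (Suc (Suc j)) xs)"
    using swap_adj_move_to_front[of j xs] Suc.prems by (simp add: mult.assoc[symmetric] const_mult[symmetric])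
  finally show ?case by blast
qed

lemma sort_eq_Cons_Min:
  assumes "y \<in> set xs" "\<forall>x\<in>set xs. y \<le> x" "mset xs = mset (y # zs)"
  shows "sort xs = y # sort (zs :: nat list)"
proof -
  have "set zs \<subseteq> set xs" using assms(3) by (metis insert_subset mset.simps(2) set_mset_mset set_subset_Cons subset_code(1) set_mset_add_mset_insert)
  then have "sorted (y # sort zs)" using assms(2) by auto
  moreover have "mset (y # sort zs) = mset xs" using assms(3) by simp
  ultimately show ?thesis by (metis properties_for_sort)
qed

lemma cong_Ip_sort:
  assumes ss: "s * s = 1"
  shows "swap_sign p s L F \<Longrightarrow> length xs = L \<Longrightarrow> \<exists>k. cong_Ip p (F xs) (const (s ^ k) * F (sort xs))"
proof (induction L arbitrary: F xs)
  case 0 then show ?case by (intro exI[of _ 0]) simp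
next
  case (Suc L)
  define y where "y = Min (set xs)"
  have ne: "xs \<noteq> []" using Suc.prems by auto
  have yin: "y \<in> set xs" unfolding y_def using ne by simp
  then obtain j where j: "j < length xs" "xs ! j = y" by (meson in_set_conv_nth)
  define zs where "zs = take j xs @ drop (Suc j) xs"
  obtain k1 where k1: "cong_Ip p (F xs) (const (s ^ k1) * F (y # zs))"
    using cong_Ip_move_to_front[OF Suc.prems(1) ss Suc.prems(2), of j] j Suc.prems unfolding zs_def by auto
  have mz: "mset xs = mset (y # zs)"
    using id_take_nth_drop[OF j(1)] j(2) unfolding zs_def
    by (metis mset.simps(2) mset_append add_mset_add_single union_commute union_assoc union_mset_add_mset_left)
  have lz: "length zs = L" unfolding zs_def using j Suc.prems by simp
  define F' where "F' ws = F (y # ws)" for ws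
  have sp': "swap_sign p s L F'"
    unfolding swap_sign_def F'_def
  proof (intro allI impI)
    fix ws :: "nat list" and i assume "length ws = L" "Suc i < L"
    then show "cong_Ip p (F (y # swap_adj i ws)) (const s * F (y # ws))"
      using Suc.prems(1) unfolding swap_sign_def by (metis Suc_less_eq length_Cons swap_adj_Cons)
  qed
  obtain k2 where k2: "cong_Ip p (F' zs) (const (s ^ k2) * F' (sort zs))" using Suc.IH[OF sp' lz] by auto
  have so: "sort xs = y # sort zs"
    by (rule sort_eq_Cons_Min[OF yin _ mz]) (simp add: y_def)
  have "cong_Ip p (F xs) (const (s ^ k1) * (const (s ^ k2) * F' (sort zs)))"
    using cong_Ip_trans[OF k1 cong_Ip_lmult[OF k2[unfolded F'_def]]] unfolding F'_def .
  then have "cong_Ip p (F xs) (const (s ^ (k1 + k2)) * F (sort xs))"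
    by (simp add: so F'_def power_add const_mult mult.assoc)
  then show ?case by blast
qed

lemma sorted_not_distinct_adjacent:
  "sorted (ys :: nat list) \<Longrightarrow> \<not> distinct ys \<Longrightarrow> \<exists>i. Suc i < length ys \<and> ys ! i = ys ! Suc i"
proof (induction ys)
  case Nil then show ?case by simp
next
  case (Cons a ys)
  show ?case
  proof (cases "a \<in> set ys")
    case True
    then obtain b ys' where ys: "ys = b # ys'" by (cases ys) auto
    have "a \<le> b" using Cons.prems ys by simp
    moreover have "b \<le> a" using Cons.prems ys True by auto
    ultimately show ?thesis using ys by (intro exI[of _ 0]) simp
  next
    case False
    then have "\<not> distinct ys" using Cons.prems by simp
    then obtain i where "Suc i < length ys" "ys ! i = ys ! Suc i" using Cons by auto
    then show ?thesis by (intro exI[of _ "Suc i"]) simp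
  qed
qed

lemma alternating_not_distinct_in_Ip:
  assumes two: "(2::'k::field) \<noteq> 0" and sp: "swap_sign p (-1) L (F :: nat list \<Rightarrow> 'k fa)"
    and len: "length xs = L" and nd: "\<not> distinct xs"
  shows "F xs \<in> Ip p"
proof -
  obtain k where k: "cong_Ip p (F xs) (const ((-1) ^ k) * F (sort xs))"
    using cong_Ip_sort[of "-1::'k" p L F xs] sp len by auto
  obtain i where i: "Suc i < length (sort xs)" "sort xs ! i = sort xs ! Suc i"
    using sorted_not_distinct_adjacent[of "sort xs"] nd by auto
  have "cong_Ip p (F (sort xs)) (const (-1) * F (sort xs))"
    using sp i len unfolding swap_sign_def by (metis length_sort swap_adj_same)
  then have "F (sort xs) + F (sort xs) \<in> Ip p" by (simp add: cong_Ip_def const_uminus)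
  then have "F (sort xs) \<in> Ip p" by (rule Ip_cancel_two[OF two])
  then have "const ((-1) ^ k) * F (sort xs) \<in> Ip p" by (rule Ip_lmult)
  then show ?thesis by (rule cong_Ip_Ip[OF k])
qed

section \<open>The polynomials \<open>h\<close>\<close>

definition yy_factor :: "nat list \<Rightarrow> nat \<Rightarrow> 'k::comm_ring_1 fa" where
  "yy_factor is t = comm (yv (is ! (2*t))) (yv (is ! (2*t+1)))"
definition yz_factor :: "nat \<Rightarrow> nat list \<Rightarrow> nat list \<Rightarrow> nat \<Rightarrow> 'k::comm_ring_1 fa" where
  "yz_factor m is js t = comm (yv (is ! (2*m+t))) (zv (js ! t))"
definition zz_factor :: "nat \<Rightarrow> nat list \<Rightarrow> nat \<Rightarrow> 'k::comm_ring_1 fa" where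
  "zz_factor n js t = jord (zv (js ! (n+2*t))) (zv (js ! (n+2*t+1)))"

lemma hpoly_factors: "hpoly m n r is js = prod_upto (yy_factor is) m * prod_upto (yz_factor m is js) n * prod_upto (zz_factor n js) r"
  unfolding hpoly_def yy_factor_def[abs_def] yz_factor_def[abs_def] zz_factor_def[abs_def] by simp

lemma yy_block_swap:
  assumes i: "Suc i < 2*m" and len: "2*m \<le> length is"
  shows "cong_Ip p (prod_upto (yy_factor (swap_adj i is)) m) (const (-1) * (prod_upto (yy_factor is) m :: 'k::comm_ring_1 fa))"
proof -
  let ?is = "swap_adj i is"
  have nth: "\<And>k. ?is ! k = (if k = i then is ! Suc i else if k = Suc i then is ! i else is ! k)"
    using nth_swap_adj[of i "is"] i len by simp
  show ?thesis
  proof (cases "even i")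
    case True
    then obtain t where t: "i = 2*t" by (auto elim: evenE)
    show ?thesis
    proof (rule cong_Ip_prod_upto_single[where t=t])
      show "t < m" using i t by simp
      show "yy_factor ?is s = yy_factor is s" if "s < m" "s \<noteq> t" for s
        unfolding yy_factor_def nth using that t by auto
      show "cong_Ip p (yy_factor ?is t) (const (-1) * (yy_factor is t :: 'k fa))"
        unfolding yy_factor_def nth using t by (simp add: const_uminus comm_antisym[of "yv (is ! Suc (2*t))"])
    qed
  next
    case False
    then obtain t where t: "i = 2*t+1" by (metis oddE)
    show ?thesis
    proof (rule cong_Ip_prod_upto_pair[where t=t])
      show "Suc t < m" using i t by simp
      show "yy_factor ?is s = yy_factor is s" if "s < m" "s \<noteq> t" "s \<noteq> Suc t" for s
        unfolding yy_factor_def nth using that t by auto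
      show "cong_Ip p (yy_factor ?is t * yy_factor ?is (Suc t)) (const (-1) * (yy_factor is t * yy_factor is (Suc t) :: 'k fa))"
        unfolding yy_factor_def nth using t Ip_yy_exchange[of "is ! (2*t)" "is ! (2*t+1)" "is ! (2*t+2)" "is ! (2*t+3)" p]
        by (intro cong_Ip_neg_if_sum) (simp add: numeral_eq_Suc)
    qed
  qed
qed

lemma yy_yz_seam_swap:
  assumes m: "m = Suc M" and n: "n = Suc N" and len: "length is = 2*m+n"
  shows "cong_Ip p (prod_upto (yy_factor (swap_adj (2*M+1) is)) m * prod_upto (yz_factor m (swap_adj (2*M+1) is) js) n)
    (const (-1) * (prod_upto (yy_factor is) m * prod_upto (yz_factor m is js) n) :: 'k::comm_ring_1 fa)"
proof -
  let ?is = "swap_adj (2*M+1) is"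
  have nth: "\<And>k. ?is ! k = (if k = 2*M+1 then is ! (2*M+2) else if k = 2*M+2 then is ! (2*M+1) else is ! k)"
    using nth_swap_adj[of "2*M+1" "is"] m n len by simp
  show ?thesis unfolding m n
  proof (rule cong_Ip_prod_upto_seam)
    show "yy_factor ?is s = yy_factor is s" if "s < M" for s unfolding yy_factor_def nth using that by auto
    show "yz_factor (Suc M) ?is js (Suc s) = yz_factor (Suc M) is js (Suc s)" for s
      unfolding yz_factor_def nth by auto
    show "cong_Ip p (yy_factor ?is M * yz_factor (Suc M) ?is js 0) (const (-1) * (yy_factor is M * yz_factor (Suc M) is js 0) :: 'k fa)"
      unfolding yy_factor_def yz_factor_def nth using Ip_yy_yz_exchange[of "is ! (2*M)" "is ! (2*M+1)" "is ! (2*M+2)" "js ! 0" p]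
      by (intro cong_Ip_neg_if_sum) (simp add: numeral_eq_Suc)
  qed
qed

lemma yz_block_swap_y:
  assumes t: "i = 2*m+t" and i: "Suc i < 2*m+n" and len: "length is = 2*m+n"
  shows "cong_Ip p (prod_upto (yz_factor m (swap_adj i is) js) n) (const (-1) * (prod_upto (yz_factor m is js) n :: 'k::comm_ring_1 fa))"
proof (rule cong_Ip_prod_upto_pair[where t=t])
  let ?is = "swap_adj i is"
  have nth: "\<And>k. ?is ! k = (if k = i then is ! Suc i else if k = Suc i then is ! i else is ! k)"
    using nth_swap_adj[of i "is"] i len by simp
  show "Suc t < n" using i t by simp
  show "yz_factor m ?is js s = yz_factor m is js s" if "s < n" "s \<noteq> t" "s \<noteq> Suc t" for s
    unfolding yz_factor_def nth using that t by auto
  have "comm (zv (js ! t)) (yv (is ! (2*m+t))) * comm (yv (is ! (2*m+t+1))) (zv (js ! Suc t))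
       + comm (zv (js ! t)) (yv (is ! (2*m+t+1))) * comm (yv (is ! (2*m+t))) (zv (js ! Suc t))
       \<in> (Ip p :: 'k fa set)" by (rule Ip_zy_yz_exchange)
  then have "yz_factor m is js t * yz_factor m is js (Suc t) + yz_factor m ?is js t * yz_factor m ?is js (Suc t) \<in> (Ip p :: 'k fa set)"
    unfolding yz_factor_def nth using t by (simp add: comm_antisym[of "zv _"]) (metis Ip_uminus_iff minus_add_distrib diff_conv_add_uminus)
  then show "cong_Ip p (yz_factor m ?is js t * yz_factor m ?is js (Suc t)) (const (-1) * (yz_factor m is js t * yz_factor m is js (Suc t)) :: 'k fa)"
    by (rule cong_Ip_neg_if_sum)
qed

lemma hpoly_swap_y:
  assumes len: "length is = 2*m+n" and i: "Suc i < 2*m+n"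
  shows "cong_Ip p (hpoly m n r (swap_adj i is) js) (const (-1) * (hpoly m n r is js :: 'k::comm_ring_1 fa))"
proof -
  let ?is = "swap_adj i is"
  have nth: "\<And>k. ?is ! k = (if k = i then is ! Suc i else if k = Suc i then is ! i else is ! k)"
    using nth_swap_adj[of i "is"] len i by simp
  have "cong_Ip p (prod_upto (yy_factor ?is) m * prod_upto (yz_factor m ?is js) n)
      (const (-1) * (prod_upto (yy_factor is) m * prod_upto (yz_factor m is js) n) :: 'k fa)"
  proof (cases rule: linorder_cases[of "Suc i" "2*m"])
    case less
    have "prod_upto (yz_factor m ?is js) n = (prod_upto (yz_factor m is js) n :: 'k fa)"
      using less by (intro prod_upto_cong) (auto simp: yz_factor_def nth)
    moreover have "cong_Ip p (prod_upto (yy_factor ?is) m) (const (-1) * (prod_upto (yy_factor is) m :: 'k fa))"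
      by (rule yy_block_swap) (use less len in auto)
    ultimately show ?thesis by (metis cong_Ip_scaled_rmult)
  next
    case equal
    then obtain M where M: "m = Suc M" "i = 2*M+1" by (cases m) auto
    from i equal obtain N where N: "n = Suc N" by (cases n) auto
    show ?thesis unfolding M(2) by (rule yy_yz_seam_swap[OF M(1) N len])
  next
    case greater
    then obtain t where t: "i = 2*m+t" using le_Suc_ex[of "2*m" i] by auto
    have "prod_upto (yy_factor ?is) m = (prod_upto (yy_factor is) m :: 'k fa)"
      by (rule prod_upto_cong) (use greater in \<open>simp add: yy_factor_def nth\<close>)
    moreover have "cong_Ip p (prod_upto (yz_factor m ?is js) n) (const (-1) * (prod_upto (yz_factor m is js) n :: 'k fa))"
      by (rule yz_block_swap_y[OF t i len])
    ultimately show ?thesis by (metis cong_Ip_scaled_lmult)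
  qed
  then show ?thesis unfolding hpoly_factors by (rule cong_Ip_scaled_rmult)
qed

lemma yz_block_swap_z:
  assumes i: "Suc i < n" and len: "n \<le> length js"
  shows "cong_Ip p (prod_upto (yz_factor m is (swap_adj i js)) n) (const 1 * (prod_upto (yz_factor m is js) n :: 'k::comm_ring_1 fa))"
proof (rule cong_Ip_prod_upto_pair[where t=i])
  let ?js = "swap_adj i js"
  have nth: "\<And>k. ?js ! k = (if k = i then js ! Suc i else if k = Suc i then js ! i else js ! k)"
    using nth_swap_adj[of i js] i len by simp
  show "Suc i < n" by (rule i)
  show "yz_factor m is ?js s = yz_factor m is js s" if "s < n" "s \<noteq> i" "s \<noteq> Suc i" for s
    unfolding yz_factor_def nth using that by auto
  let ?a = "is ! (2*m+i)" and ?c = "is ! (2*m+Suc i)" and ?b = "js ! i" and ?d = "js ! Suc i"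
  have "(comm (yv ?a) (zv ?b) * comm (yv ?c) (zv ?d) :: 'k fa) - comm (yv ?a) (zv ?d) * comm (yv ?c) (zv ?b)
     = - (comm (zv ?b) (yv ?a) * comm (yv ?c) (zv ?d) + comm (zv ?b) (yv ?c) * comm (yv ?a) (zv ?d))
       - jord (comm (yv ?c) (zv ?b)) (comm (yv ?a) (zv ?d))"
    by (simp add: comm_def jord_def algebra_simps)
  also have "\<dots> \<in> Ip p" by (intro Ip_diff Ip_uminus Ip_zy_yz_exchange Ip_jord_yz_yz)
  finally show "cong_Ip p (yz_factor m is ?js i * yz_factor m is ?js (Suc i)) (const 1 * (yz_factor m is js i * yz_factor m is js (Suc i)) :: 'k fa)"
    unfolding yz_factor_def nth by (intro cong_Ip_if_diff) simp
qed

lemma yz_zz_seam_swap: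
  assumes n: "n = Suc N" and r: "r = Suc R" and len: "length js = n+2*r"
  shows "cong_Ip p (prod_upto (yz_factor m is (swap_adj N js)) n * prod_upto (zz_factor n (swap_adj N js)) r)
    (const 1 * (prod_upto (yz_factor m is js) n * prod_upto (zz_factor n js) r) :: 'k::comm_ring_1 fa)"
proof -
  let ?js = "swap_adj N js"
  have nth: "\<And>k. ?js ! k = (if k = N then js ! Suc N else if k = Suc N then js ! N else js ! k)"
    using nth_swap_adj[of N js] n r len by simp
  show ?thesis unfolding n r
  proof (rule cong_Ip_prod_upto_seam)
    show "yz_factor m is ?js s = yz_factor m is js s" if "s < N" for s unfolding yz_factor_def nth using that by auto
    show "zz_factor (Suc N) ?js (Suc s) = zz_factor (Suc N) js (Suc s)" for s
      unfolding zz_factor_def nth by auto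
    have "comm (yv (is ! (2*m+N))) (zv (js ! N)) * jord (zv (js ! Suc N)) (zv (js ! Suc (Suc N)))
        - comm (yv (is ! (2*m+N))) (zv (js ! Suc N)) * jord (zv (js ! N)) (zv (js ! Suc (Suc N)))
         \<in> (Ip p :: 'k fa set)" by (rule Ip_yz_jord_exchange)
    then show "cong_Ip p (yz_factor m is ?js N * zz_factor (Suc N) ?js 0) (const 1 * (yz_factor m is js N * zz_factor (Suc N) js 0) :: 'k fa)"
      unfolding yz_factor_def zz_factor_def nth by (intro cong_Ip_if_diff) simp
  qed
qed

lemma zz_block_swap:
  assumes u: "i = n+u" and i: "Suc i < n+2*r" and len: "length js = n+2*r"
  shows "cong_Ip p (prod_upto (zz_factor n (swap_adj i js)) r) (const 1 * (prod_upto (zz_factor n js) r :: 'k::comm_ring_1 fa))"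
proof -
  let ?js = "swap_adj i js"
  have nth: "\<And>k. ?js ! k = (if k = i then js ! Suc i else if k = Suc i then js ! i else js ! k)"
    using nth_swap_adj[of i js] i len by simp
  show ?thesis
  proof (cases "even u")
    case True
    then obtain t where t: "u = 2*t" by (auto elim: evenE)
    show ?thesis
    proof (rule cong_Ip_prod_upto_single[where t=t])
      show "t < r" using i u t by simp
      show "zz_factor n ?js s = zz_factor n js s" if "s < r" "s \<noteq> t" for s
        unfolding zz_factor_def nth using that u t by auto
      show "cong_Ip p (zz_factor n ?js t) (const 1 * (zz_factor n js t :: 'k fa))"
        unfolding zz_factor_def nth using u t by (simp add: jord_commute)
    qed
  next
    case False
    then obtain t where t: "u = 2*t+1" by (metis oddE)
    show ?thesis
    proof (rule cong_Ip_prod_upto_pair[where t=t])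
      show "Suc t < r" using i u t by simp
      show "zz_factor n ?js s = zz_factor n js s" if "s < r" "s \<noteq> t" "s \<noteq> Suc t" for s
        unfolding zz_factor_def nth using that u t by auto
      have "jord (zv (js ! (n+2*t))) (zv (js ! (n+2*t+1))) * jord (zv (js ! (n+2*t+2))) (zv (js ! (n+2*t+3)))
         - jord (zv (js ! (n+2*t))) (zv (js ! (n+2*t+2))) * jord (zv (js ! (n+2*t+1))) (zv (js ! (n+2*t+3)))
         \<in> (Ip p :: 'k fa set)" by (rule Ip_jord_exchange)
      then show "cong_Ip p (zz_factor n ?js t * zz_factor n ?js (Suc t)) (const 1 * (zz_factor n js t * zz_factor n js (Suc t)) :: 'k fa)"
        unfolding zz_factor_def nth using u t by (intro cong_Ip_if_diff) (simp add: numeral_eq_Suc)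
    qed
  qed
qed

lemma hpoly_swap_z:
  assumes len: "length js = n+2*r" and i: "Suc i < n+2*r"
  shows "cong_Ip p (hpoly m n r is (swap_adj i js)) (const 1 * (hpoly m n r is js :: 'k::comm_ring_1 fa))"
proof -
  let ?js = "swap_adj i js"
  have nth: "\<And>k. ?js ! k = (if k = i then js ! Suc i else if k = Suc i then js ! i else js ! k)"
    using nth_swap_adj[of i js] len i by simp
  have "cong_Ip p (prod_upto (yz_factor m is ?js) n * prod_upto (zz_factor n ?js) r)
      (const 1 * (prod_upto (yz_factor m is js) n * prod_upto (zz_factor n js) r) :: 'k fa)"
  proof (cases rule: linorder_cases[of "Suc i" n])
    case less
    have "prod_upto (zz_factor n ?js) r = (prod_upto (zz_factor n js) r :: 'k fa)"
      by (rule prod_upto_cong) (use less in \<open>simp add: zz_factor_def nth\<close>)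
    moreover have "cong_Ip p (prod_upto (yz_factor m is ?js) n) (const 1 * (prod_upto (yz_factor m is js) n :: 'k fa))"
      by (rule yz_block_swap_z) (use less len in auto)
    ultimately show ?thesis by (metis cong_Ip_scaled_rmult)
  next
    case equal
    then obtain N where N: "n = Suc N" "i = N" by (cases n) auto
    from i equal obtain R where R: "r = Suc R" by (cases r) auto
    show ?thesis unfolding N(2) by (rule yz_zz_seam_swap[OF N(1) R len])
  next
    case greater
    then obtain u where u: "i = n+u" using le_Suc_ex[of n i] by auto
    have "prod_upto (yz_factor m is ?js) n = (prod_upto (yz_factor m is js) n :: 'k fa)"
      by (rule prod_upto_cong) (use greater in \<open>simp add: yz_factor_def nth\<close>)
    moreover have "cong_Ip p (prod_upto (zz_factor n ?js) r) (const 1 * (prod_upto (zz_factor n js) r :: 'k fa))"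
      by (rule zz_block_swap[OF u i len])
    ultimately show ?thesis by (metis cong_Ip_scaled_lmult)
  qed
  then have "cong_Ip p (prod_upto (yy_factor is) m * (prod_upto (yz_factor m is ?js) n * prod_upto (zz_factor n ?js) r))
     (const 1 * (prod_upto (yy_factor is) m * (prod_upto (yz_factor m is js) n * prod_upto (zz_factor n js) r)) :: 'k fa)"
    by (rule cong_Ip_scaled_lmult)
  then show ?thesis unfolding hpoly_factors by (simp add: mult.assoc)
qed

lemma swap_sign_hpoly_z: "swap_sign p 1 (n+2*r) (\<lambda>js. hpoly m n r is js :: 'k::comm_ring_1 fa)"
  unfolding swap_sign_def using hpoly_swap_z by blast

lemma swap_sign_hpoly_y: "swap_sign p (-1) (2*m+n) (\<lambda>is. hpoly m n r is js :: 'k::comm_ring_1 fa)"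
  unfolding swap_sign_def using hpoly_swap_y by blast

lemma hpoly_sort_z: "length js = n+2*r \<Longrightarrow> cong_Ip p (hpoly m n r is js) (hpoly m n r is (sort js) :: 'k::comm_ring_1 fa)"
proof -
  assume l: "length js = n+2*r"
  have "swap_sign p 1 (n+2*r) (\<lambda>js. hpoly m n r is js :: 'k fa)" by (rule swap_sign_hpoly_z)
  then show ?thesis using cong_Ip_sort[of "1::'k" p "n+2*r" "\<lambda>js. hpoly m n r is js" js] l by auto
qed

lemma hpoly_perm_z: assumes "mset js' = mset js" "length js = n+2*r"
  shows "cong_Ip p (hpoly m n r is js) (hpoly m n r is js' :: 'k::comm_ring_1 fa)"
proof -
  have l: "length js' = n+2*r" using assms by (metis size_mset)
  have s: "sort js' = sort js" using assms(1) by (metis properties_for_sort sorted_sort mset_sort)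
  show ?thesis using hpoly_sort_z[OF assms(2), of p m "is"] hpoly_sort_z[OF l, of p m "is"] unfolding s
    by (meson cong_Ip_sym cong_Ip_trans)
qed

lemma prod_upto_jord_same: "prod_upto (\<lambda>t. jord (zv c) (zv c)) k = const (2 ^ k) * (zv c ^ (2*k) :: 'k::comm_ring_1 fa)"
proof (induction k)
  case 0 then show ?case by simp
next
  case (Suc k)
  have "prod_upto (\<lambda>t. jord (zv c) (zv c)) (Suc k) = prod_upto (\<lambda>t. jord (zv c) (zv c)) k * jord (zv c) (zv c)" by simp
  also have "\<dots> = const (2 ^ k) * zv c ^ (2*k) * (jord (zv c) (zv c) :: 'k fa)" by (simp only: Suc.IH)
  also have "\<dots> = const (2 ^ k) * zv c ^ (2*k) * (const 2 * zv c ^ 2 :: 'k fa)" by (simp only: jord_same)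
  also have "\<dots> = const (2 ^ k) * const 2 * (zv c ^ (2*k) * zv c ^ 2 :: 'k fa)"
    by (metis (no_types, lifting) const_comm mult.assoc)
  also have "\<dots> = const (2 ^ Suc k) * zv c ^ (2 * Suc k)"
    by (simp add: const_mult[symmetric] power_add[symmetric] mult.commute)
  finally show ?case .
qed

lemma hpoly_in_Ip_yz_block:
  assumes "p \<le> n" "odd p" "\<And>t. t < p \<Longrightarrow> arr ! t = c"
  shows "hpoly m n r is arr \<in> (Ip p :: 'k::comm_ring_1 fa set)"
proof -
  obtain q where "p = 2*q + 1" using assms(2) by (auto elim: oddE)
  then obtain k where k: "p = 2*k - 1" "k \<ge> 1" by (intro that[of "q+1"]) auto
  let ?g = "\<lambda>t. is ! (2*m+t)"
  have "prod_upto (\<lambda>t. comm (yv (?g t)) (zv c)) (2*k-1) * zv c ^ (2*0) \<in> (Ip p :: 'k fa set)"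
    by (rule Ip_yz_power) (use k in auto)
  moreover have "2*k-1 = p" using k by simp
  ultimately have G0: "prod_upto (\<lambda>t. comm (yv (?g t)) (zv c)) p \<in> (Ip p :: 'k fa set)" by simp
  have "prod_upto (yz_factor m is arr) p = (prod_upto (\<lambda>t. comm (yv (?g t)) (zv c)) p :: 'k fa)"
    by (rule prod_upto_cong) (simp add: yz_factor_def assms(3))
  with G0 have G: "prod_upto (yz_factor m is arr) p \<in> (Ip p :: 'k fa set)" by simp
  have eq: "hpoly m n r is arr = prod_upto (yy_factor is) m * (prod_upto (yz_factor m is arr) p * prod_list (map (yz_factor m is arr) [p..<n])) * prod_upto (zz_factor n arr) r"
    unfolding hpoly_factors prod_upto_split[OF assms(1), of "yz_factor m is arr"] ..
  show ?thesis unfolding eq mult.assoc[symmetric] by (rule Ip_rmult, rule Ip_rmult, rule Ip_lmult, rule G)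
qed

lemma hpoly_in_Ip_odd_n:
  assumes "n < p" "odd n" "odd p" "p \<le> n + 2*r" "\<And>t. t < p \<Longrightarrow> arr ! t = c"
  shows "hpoly m n r is arr \<in> (Ip p :: 'k::comm_ring_1 fa set)"
proof -
  obtain q where "n = 2*q + 1" using assms(2) by (auto elim: oddE)
  then obtain k where k: "n = 2*k - 1" "k \<ge> 1" by (intro that[of "q+1"]) auto
  define n' where "n' = (p - n) div 2"
  have n': "2*n' = p - n" using assms(1,2,3) unfolding n'_def by (auto elim!: oddE)
  have n'r: "n' \<le> r" using n' assms(4) by simp
  let ?g = "\<lambda>t. is ! (2*m+t)"
  have "prod_upto (\<lambda>t. comm (yv (?g t)) (zv c)) (2*k-1) * zv c ^ (2*n') \<in> (Ip p :: 'k fa set)"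
    by (rule Ip_yz_power) (use k n' assms(1) in auto)
  moreover have "2*k-1 = n" using k by simp
  ultimately have G0: "prod_upto (\<lambda>t. comm (yv (?g t)) (zv c)) n * zv c ^ (2*n') \<in> (Ip p :: 'k fa set)" by simp
  have YZ: "prod_upto (yz_factor m is arr) n = (prod_upto (\<lambda>t. comm (yv (?g t)) (zv c)) n :: 'k fa)"
    by (rule prod_upto_cong) (simp add: yz_factor_def assms(5) assms(1) less_trans[OF _ assms(1)])
  have ZZ: "prod_upto (zz_factor n arr) n' = (prod_upto (\<lambda>t. jord (zv c) (zv c)) n' :: 'k fa)"
  proof (rule prod_upto_cong)
    fix t assume t: "t < n'"
    have "arr ! (n + 2 * t) = c" using assms(5)[of "n+2*t"] t n' by simp
    moreover have "arr ! Suc (n + 2 * t) = c" using assms(5)[of "n+2*t+1"] t n' by simp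
    ultimately show "zz_factor n arr t = (jord (zv c) (zv c) :: 'k fa)" by (simp add: zz_factor_def)
  qed
  let ?Z = "zv c ^ (2*n') :: 'k fa"
  have eq: "hpoly m n r is arr = prod_upto (yy_factor is) m * (prod_upto (\<lambda>t. comm (yv (?g t)) (zv c)) n * ?Z) * (const (2^n') * prod_list (map (zz_factor n arr) [n'..<r]))"
  proof -
    have "hpoly m n r is arr = prod_upto (yy_factor is) m * prod_upto (\<lambda>t. comm (yv (?g t)) (zv c)) n * (const (2^n') * ?Z * prod_list (map (zz_factor n arr) [n'..<r]))"
      unfolding hpoly_factors prod_upto_split[OF n'r, of "zz_factor n arr"] YZ ZZ prod_upto_jord_same ..
    also have "const (2^n') * ?Z = ?Z * const (2^n')" by (rule const_comm)
    finally show ?thesis by (simp only: mult.assoc)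
  qed
  show ?thesis unfolding eq by (rule Ip_rmult, rule Ip_lmult, rule G0)
qed

lemma hpoly_in_Ip_even_n:
  assumes "n < p" "even n" "odd p" "p + 1 \<le> n + 2*r" "\<And>t. t \<le> n \<Longrightarrow> arr ! t = c"
    "\<And>t. t < p - 1 - n \<Longrightarrow> arr ! (n+2+t) = c"
  shows "hpoly m n r is arr \<in> (Ip p :: 'k::comm_ring_1 fa set)"
proof -
  obtain q where q: "n = 2*q" using assms(2) by (auto elim: evenE)
  define k where "k = q + 1"
  have k: "n = 2*k - 2" "k \<ge> 1" using q k_def by auto
  define n' where "n' = (p - 1 - n) div 2"
  have n': "2*n' = p - 1 - n" using assms(1,2,3) unfolding n'_def by (auto elim!: oddE evenE)
  have n'r: "Suc n' \<le> r" using n' assms(1,4) by arith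
  define e where "e = arr ! Suc n"
  let ?g = "\<lambda>t. is ! (2*m+t)"
  have "prod_upto (\<lambda>t. comm (yv (?g t)) (zv c)) (2*k-2) * jord (zv e) (zv c) * zv c ^ (2*n') \<in> (Ip p :: 'k fa set)"
    by (rule Ip_yz_power_jord) (use k n' assms(1) in auto)
  moreover have "2*k-2 = n" using k by simp
  ultimately have G0: "prod_upto (\<lambda>t. comm (yv (?g t)) (zv c)) n * jord (zv c) (zv e) * zv c ^ (2*n') \<in> (Ip p :: 'k fa set)"
    by (simp add: jord_commute)
  have YZ: "prod_upto (yz_factor m is arr) n = (prod_upto (\<lambda>t. comm (yv (?g t)) (zv c)) n :: 'k fa)"
    by (rule prod_upto_cong) (simp add: yz_factor_def assms(5))
  have Z0: "zz_factor n arr 0 = (jord (zv c) (zv e) :: 'k fa)" by (simp add: zz_factor_def assms(5) e_def)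
  have ZZ: "prod_upto (\<lambda>t. zz_factor n arr (Suc t)) n' = (prod_upto (\<lambda>t. jord (zv c) (zv c)) n' :: 'k fa)"
  proof (rule prod_upto_cong)
    fix t assume t: "t < n'"
    have "arr ! (n + 2 * Suc t) = c" using assms(6)[of "2*t"] t n' by (simp add: algebra_simps)
    moreover have "arr ! Suc (n + 2 * Suc t) = c" using assms(6)[of "2*t+1"] t n' by (simp add: algebra_simps)
    ultimately show "zz_factor n arr (Suc t) = (jord (zv c) (zv c) :: 'k fa)" by (simp add: zz_factor_def)
  qed
  let ?Z = "zv c ^ (2*n') :: 'k fa"
  have eq: "hpoly m n r is arr = prod_upto (yy_factor is) m * (prod_upto (\<lambda>t. comm (yv (?g t)) (zv c)) n * jord (zv c) (zv e) * ?Z) * (const (2^n') * prod_list (map (zz_factor n arr) [Suc n'..<r]))"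
  proof -
    have "hpoly m n r is arr = prod_upto (yy_factor is) m * prod_upto (\<lambda>t. comm (yv (?g t)) (zv c)) n * ((jord (zv c) (zv e) * (const (2^n') * ?Z)) * prod_list (map (zz_factor n arr) [Suc n'..<r]))"
      unfolding hpoly_factors prod_upto_split[OF n'r, of "zz_factor n arr"] YZ prod_upto_Suc_shift[of "zz_factor n arr" n'] Z0 ZZ prod_upto_jord_same ..
    also have "const (2^n') * ?Z = ?Z * const (2^n')" by (rule const_comm)
    finally show ?thesis by (simp only: mult.assoc)
  qed
  show ?thesis unfolding eq by (rule Ip_rmult, rule Ip_lmult, rule G0)
qed

lemma mset_eq_replicate_count_filter: "mset js = mset (replicate (count_list js c) c @ filter (\<lambda>x. x \<noteq> c) js)"
proof -
  have "mset js = {#x \<in># mset js. x = c#} + {#x \<in># mset js. x \<noteq> c#}" by (rule multiset_partition)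
  also have "{#x \<in># mset js. x = c#} = replicate_mset (count_list js c) c"
    by (simp add: filter_eq_replicate_mset count_mset)
  finally show ?thesis by simp
qed

lemma mset_replicate_split:
  assumes "k \<le> N"
  shows "mset (replicate k c @ e # replicate (N - k) c @ xs) = mset (replicate N c @ e # xs)"
proof -
  have "replicate N c = replicate k c @ replicate (N - k) c"
    using assms by (metis le_add_diff_inverse replicate_add)
  then show ?thesis by (simp add: ac_simps)
qed

text \<open>Identity (8) fixes the first \<open>p + 1\<close> \<open>z\<close>-arguments of \<open>h\<close> to be \<open>c\<close>, except the one
  at position \<open>n + 1\<close> (counting from \<open>0\<close>).  If \<open>N - n\<close> is odd, an index different from \<open>c\<close>
  is put there; otherwise \<open>N \<ge> p + 1\<close> and the copies of \<open>c\<close> suffice.\<close>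

lemma hpoly_in_Ip_even_n_arrangement:
  assumes p: "odd p" and ev: "even n" and np: "n < p" and Np: "p \<le> N"
    and lr: "N + length rest = n + 2*r"
  shows "\<exists>arr. mset arr = mset (replicate N c @ rest) \<and> hpoly m n r is arr \<in> (Ip p :: 'k::comm_ring_1 fa set)"
proof (cases "odd (N - n)")
  case True
  from True lr obtain e rest' where er: "rest = e # rest'" by (cases rest) auto
  let ?arr = "replicate (Suc n) c @ e # replicate (N - Suc n) c @ rest'"
  have m1: "mset ?arr = mset (replicate N c @ rest)"
    unfolding er using np Np by (intro mset_replicate_split) simp
  have "hpoly m n r is ?arr \<in> (Ip p :: 'k fa set)"
  proof (rule hpoly_in_Ip_even_n[OF np ev p])
    show "p + 1 \<le> n + 2*r" using lr er Np by simp
    show "?arr ! t = c" if "t \<le> n" for t using that by (simp add: nth_append del: replicate_Suc)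
    show "?arr ! (n + 2 + t) = c" if "t < p - 1 - n" for t
    proof -
      have "t < N - Suc n" using that Np np by simp
      moreover have "?arr ! (n + 2 + t) = (replicate (N - Suc n) c @ rest') ! t"
        by (simp add: nth_append)
      ultimately show ?thesis by (simp add: nth_append)
    qed
  qed
  then show ?thesis using m1 by metis
next
  case False
  then have Np1: "p + 1 \<le> N" using p ev np Np by (cases "N = p") auto
  let ?arr = "replicate N c @ rest"
  have "hpoly m n r is ?arr \<in> (Ip p :: 'k fa set)"
  proof (rule hpoly_in_Ip_even_n[OF np ev p])
    show "p + 1 \<le> n + 2*r" using lr Np1 by simp
    show "?arr ! t = c" if "t \<le> n" for t using that Np1 np by (simp add: nth_append)
    show "?arr ! (n + 2 + t) = c" if "t < p - 1 - n" for t
    proof -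
      have "n + 2 + t < N" using that Np1 np by arith
      then show ?thesis by (simp add: nth_append)
    qed
  qed
  then show ?thesis by blast
qed

lemma hpoly_in_Ip_if_count_ge:
  assumes p: "odd p" and lj: "length js = n+2*r" and cnt: "p \<le> count_list js c"
  shows "hpoly m n r is js \<in> (Ip p :: 'k::comm_ring_1 fa set)"
proof -
  define N where "N = count_list js c"
  define rest where "rest = filter (\<lambda>x. x \<noteq> c) js"
  have ms: "mset js = mset (replicate N c @ rest)"
    unfolding N_def rest_def by (rule mset_eq_replicate_count_filter)
  have lr: "N + length rest = n + 2*r" using arg_cong[OF ms, of size] lj by simp
  have Np: "p \<le> N" using cnt N_def by simp
  have "\<exists>arr. mset arr = mset (replicate N c @ rest) \<and> hpoly m n r is arr \<in> (Ip p :: 'k fa set)"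
  proof (cases "p \<le> n")
    case True
    have "hpoly m n r is (replicate N c @ rest) \<in> (Ip p :: 'k fa set)"
      by (rule hpoly_in_Ip_yz_block[OF True p]) (use Np in \<open>simp add: nth_append\<close>)
    then show ?thesis by blast
  next
    case False
    then have np: "n < p" by simp
    show ?thesis
    proof (cases "odd n")
      case True
      have "hpoly m n r is (replicate N c @ rest) \<in> (Ip p :: 'k fa set)"
        by (rule hpoly_in_Ip_odd_n[OF np True p]) (use Np lr in \<open>auto simp add: nth_append\<close>)
      then show ?thesis by blast
    next
      case False
      then show ?thesis using hpoly_in_Ip_even_n_arrangement[OF p _ np Np lr] by simp
    qed
  qed
  then obtain arr where arr: "mset arr = mset js" "hpoly m n r is arr \<in> (Ip p :: 'k fa set)"
    using ms by auto
  show ?thesis using cong_Ip_Ip[OF hpoly_perm_z[OF arr(1) lj] arr(2)] .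
qed

definition deg_le :: "var \<Rightarrow> nat \<Rightarrow> 'k::comm_ring_1 fa \<Rightarrow> bool" where
  "deg_le v d f \<longleftrightarrow> (\<forall>w\<in>Poly_Mapping.keys f. count_list (letters w) v \<le> d)"

lemma keys_uminus_fa: "Poly_Mapping.keys (- f) = Poly_Mapping.keys (f :: 'k::comm_ring_1 fa)"
  by (auto simp: in_keys_iff)

lemma deg_le_add: "deg_le v a f \<Longrightarrow> deg_le v a g \<Longrightarrow> deg_le v a (f + g)"
  unfolding deg_le_def using keys_add[of f g] by blast
lemma deg_le_uminus: "deg_le v a f \<Longrightarrow> deg_le v a (- f)"
  unfolding deg_le_def keys_uminus_fa .
lemma deg_le_diff: "deg_le v a f \<Longrightarrow> deg_le v a g \<Longrightarrow> deg_le v a (f - g)"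
  using deg_le_add[of v a f "-g"] deg_le_uminus[of v a g] by simp
lemma deg_le_mult: "deg_le v a f \<Longrightarrow> deg_le v b g \<Longrightarrow> deg_le v (a + b) (f * g)"
  unfolding deg_le_def using keys_mult[of f g] by (fastforce intro: add_mono)
lemma deg_le_one: "deg_le v 0 (1 :: 'k::comm_ring_1 fa)"
  by (simp add: deg_le_def)
lemma deg_le_var: "deg_le v (if u = v then 1 else 0) (var u :: 'k::comm_ring_1 fa)"
  by (simp add: deg_le_def keys_var)
lemma deg_le_comm: "deg_le v a f \<Longrightarrow> deg_le v b g \<Longrightarrow> deg_le v (a + b) (comm f g)"
  unfolding comm_def
  by (rule deg_le_diff, rule deg_le_mult, assumption+, subst add.commute, rule deg_le_mult, assumption+)
lemma deg_le_jord: "deg_le v a f \<Longrightarrow> deg_le v b g \<Longrightarrow> deg_le v (a + b) (jord f g)"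
  unfolding jord_def
  by (rule deg_le_add, rule deg_le_mult, assumption+, subst add.commute, rule deg_le_mult, assumption+)

lemma deg_le_prod_upto: "(\<And>t. t < m \<Longrightarrow> deg_le v (d t) (f t)) \<Longrightarrow> deg_le v (\<Sum>t<m. d t) (prod_upto f m)"
proof (induction m)
  case 0 then show ?case by (simp add: deg_le_one)
next
  case (Suc m)
  then have "deg_le v ((\<Sum>t<m. d t) + d m) (prod_upto f m * f m)" by (intro deg_le_mult) auto
  then show ?case by simp
qed

lemma deg_in_le: "deg_le v d f \<Longrightarrow> deg_in v f \<le> d"
  unfolding deg_in_def deg_le_def by (auto intro!: Max.boundedI)

definition ind :: "nat \<Rightarrow> nat \<Rightarrow> nat" where "ind c x = (if x = c then 1 else 0)"

lemma deg_le_zv: "deg_le (Zv c) (ind c x) (zv x :: 'k::comm_ring_1 fa)"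
  using deg_le_var[of "Zv c" "Zv x"] by (simp add: ind_def)
lemma deg_le_yv: "deg_le (Zv c) 0 (yv x :: 'k::comm_ring_1 fa)"
  using deg_le_var[of "Zv c" "Yv x"] by simp

lemma deg_le_comm_yy: "deg_le (Zv c) 0 (comm (yv a) (yv b) :: 'k::comm_ring_1 fa)"
  using deg_le_comm[OF deg_le_yv[of c a] deg_le_yv[of c b]] by simp
lemma deg_le_comm_yz: "deg_le (Zv c) (ind c b) (comm (yv a) (zv b) :: 'k::comm_ring_1 fa)"
  using deg_le_comm[OF deg_le_yv[of c a] deg_le_zv[of c b]] by simp
lemma deg_le_jord_zz: "deg_le (Zv c) (ind c a + ind c b) (jord (zv a) (zv b) :: 'k::comm_ring_1 fa)"
  by (rule deg_le_jord[OF deg_le_zv deg_le_zv])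

lemma deg_le_hpoly: "deg_le (Zv c) ((\<Sum>t<n. ind c (js ! t)) + (\<Sum>t<r. ind c (js ! (n+2*t)) + ind c (js ! (n+2*t+1))))
    (hpoly m n r is js :: 'k::comm_ring_1 fa)"
proof -
  have A: "deg_le (Zv c) (\<Sum>t<m. 0) (prod_upto (yy_factor is) m :: 'k fa)"
    by (rule deg_le_prod_upto) (unfold yy_factor_def, rule deg_le_comm_yy)
  have B: "deg_le (Zv c) (\<Sum>t<n. ind c (js ! t)) (prod_upto (yz_factor m is js) n :: 'k fa)"
    by (rule deg_le_prod_upto) (unfold yz_factor_def, rule deg_le_comm_yz)
  have C: "deg_le (Zv c) (\<Sum>t<r. ind c (js ! (n+2*t)) + ind c (js ! (n+2*t+1))) (prod_upto (zz_factor n js) r :: 'k fa)"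
    by (rule deg_le_prod_upto) (unfold zz_factor_def, rule deg_le_jord_zz)
  show ?thesis unfolding hpoly_factors using deg_le_mult[OF deg_le_mult[OF A B] C] by simp
qed

lemma count_list_sum: "count_list xs c = (\<Sum>t<length xs. ind c (xs ! t))"
proof (induction xs)
  case Nil then show ?case by simp
next
  case (Cons x xs)
  have "(\<Sum>t<length (x#xs). ind c ((x#xs)!t)) = ind c x + (\<Sum>t<length xs. ind c (xs!t))"
    by (simp only: length_Cons sum.lessThan_Suc_shift nth_Cons_0 nth_Cons_Suc)
  then show ?case using Cons by (simp add: ind_def)
qed

lemma sum_pairs: "(\<Sum>t<n+2*r. g t) = (\<Sum>t<n. g t) + (\<Sum>t<r. g (n+2*t) + g (n+2*t+1::nat)) "
  by (induction r) (simp_all add: algebra_simps)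

lemma deg_in_hpoly_less:
  assumes "length js = n+2*r" "count_list js c < p"
  shows "deg_in (Zv c) (hpoly m n r is js :: 'k::comm_ring_1 fa) < p"
proof -
  have "deg_in (Zv c) (hpoly m n r is js :: 'k fa) \<le> count_list js c"
    using deg_in_le[OF deg_le_hpoly]
    unfolding count_list_sum assms(1) sum_pairs by simp
  then show ?thesis using assms(2) by simp
qed

definition h_set :: "nat \<Rightarrow> 'k::comm_ring_1 fa set" where
  "h_set p = {hpoly m n r is js | m n r is js. length is = 2*m + n \<and> length js = n + 2*r \<and>
      sorted_wrt (<) is \<and> sorted js \<and> (\<forall>c. deg_in (Zv c) (hpoly m n r is js :: 'k fa) < p)}"

lemma h_setI: "length is = 2*m + n \<Longrightarrow> length js = n + 2*r \<Longrightarrow>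
      sorted_wrt (<) is \<Longrightarrow> sorted js \<Longrightarrow> (\<forall>c. deg_in (Zv c) (hpoly m n r is js :: 'k fa) < p) \<Longrightarrow>
      hpoly m n r is js \<in> (h_set p :: 'k::comm_ring_1 fa set)"
  unfolding h_set_def by blast

lemma h_setE: "h \<in> (h_set p :: 'k::comm_ring_1 fa set) \<Longrightarrow> \<exists>m n r is js. h = hpoly m n r is js \<and> length is = 2*m+n \<and> length js = n+2*r"
  unfolding h_set_def by blast

lemma hpoly_in_span_h_set:
  assumes p: "odd p" and two: "(2::'k::field) \<noteq> 0"
    and li: "length is = 2*m+n" and lj: "length js = n+2*r"
  shows "hpoly m n r is js \<in> span_Ip p (h_set p :: 'k fa set)"
proof (cases "\<exists>c. p \<le> count_list js c")
  case True
  then obtain c where "p \<le> count_list js c" by blast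
  then show ?thesis using hpoly_in_Ip_if_count_ge[OF p lj] by (intro span_Ip_ideal) auto
next
  case False
  then have cnt: "\<And>c. count_list (sort js) c < p" by (simp add: not_le flip: count_mset)
  have lj': "length (sort js) = n+2*r" using lj by simp
  have c1: "cong_Ip p (hpoly m n r is js) (hpoly m n r is (sort js) :: 'k fa)" by (rule hpoly_sort_z[OF lj])
  have sp: "swap_sign p (-1) (2*m+n) (\<lambda>is. hpoly m n r is (sort js) :: 'k fa)" by (rule swap_sign_hpoly_y)
  show ?thesis
  proof (cases "distinct is")
    case False
    have "hpoly m n r is (sort js) \<in> (Ip p :: 'k fa set)"
      by (rule alternating_not_distinct_in_Ip[OF two sp li False])
    then show ?thesis using c1 by (intro span_Ip_ideal) (rule cong_Ip_Ip)
  next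
    case True
    obtain k where k: "cong_Ip p (hpoly m n r is (sort js)) (const ((-1) ^ k) * hpoly m n r (sort is) (sort js) :: 'k fa)"
      using cong_Ip_sort[of "-1::'k" p "2*m+n" _ "is"] sp li by auto
    have "hpoly m n r (sort is) (sort js) \<in> (h_set p :: 'k fa set)"
    proof (rule h_setI)
      show "\<forall>c. deg_in (Zv c) (hpoly m n r (sort is) (sort js) :: 'k fa) < p"
        using deg_in_hpoly_less[OF lj' cnt] by blast
    qed (use li lj' True in \<open>auto simp: strict_sorted_iff\<close>)
    then have "const ((-1) ^ k) * hpoly m n r (sort is) (sort js) \<in> span_Ip p (h_set p :: 'k fa set)"
      by (intro span_Ip_smult span_Ip_gen)
    then show ?thesis using cong_Ip_trans[OF c1 k] by (rule span_Ip_cong[rotated])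
  qed
qed

lemma central_zz_block: "central p (prod_upto (zz_factor n js) r :: 'k::comm_ring_1 fa)"
  by (rule central_prod_upto) (simp add: zz_factor_def central_jord_zz)

lemma comm_yy_mult_hpoly: "comm (yv a) (yv b) * hpoly m n r is js = (hpoly (Suc m) n r (a # b # is) js :: 'k::comm_ring_1 fa)"
proof -
  have Y: "prod_upto (yy_factor (a # b # is)) (Suc m) = comm (yv a) (yv b) * (prod_upto (yy_factor is) m :: 'k fa)"
  proof -
    have "prod_upto (\<lambda>t. yy_factor (a # b # is) (Suc t)) m = (prod_upto (yy_factor is) m :: 'k fa)"
      by (rule prod_upto_cong) (simp add: yy_factor_def numeral_eq_Suc)
    then show ?thesis unfolding prod_upto_Suc_shift[of "yy_factor (a # b # is)"] by (simp add: yy_factor_def)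
  qed
  have YZ: "prod_upto (yz_factor (Suc m) (a # b # is) js) n = (prod_upto (yz_factor m is js) n :: 'k fa)"
    by (rule prod_upto_cong) (simp add: yz_factor_def)
  show ?thesis unfolding hpoly_factors Y YZ by (simp add: mult.assoc)
qed

lemma nth_insert_at: "n \<le> length js \<Longrightarrow> (take n js @ b # drop n js) ! k =
    (if k < n then js ! k else if k = n then b else js ! (k - 1))"
  by (auto simp: nth_append min_def nth_Cons' not_less)

lemma hpoly_mult_comm_yz:
  assumes li: "length is = 2*m+n" and lj: "length js = n+2*r"
  shows "cong_Ip p (hpoly m n r is js * comm (yv a) (zv b))
     (hpoly m (Suc n) r (is @ [a]) (take n js @ b # drop n js) :: 'k::comm_ring_1 fa)"
proof -
  let ?js = "take n js @ b # drop n js" and ?is = "is @ [a]"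
  let ?X = "comm (yv a) (zv b) :: 'k fa"
  have nj: "n \<le> length js" using lj by simp
  have Y: "prod_upto (yy_factor ?is) m = (prod_upto (yy_factor is) m :: 'k fa)"
    by (rule prod_upto_cong) (use li in \<open>simp add: yy_factor_def nth_append\<close>)
  have YZ: "prod_upto (yz_factor m ?is ?js) (Suc n) = prod_upto (yz_factor m is js) n * ?X"
  proof -
    have "prod_upto (yz_factor m ?is ?js) n = (prod_upto (yz_factor m is js) n :: 'k fa)"
      by (rule prod_upto_cong) (use li lj in \<open>simp add: yz_factor_def nth_append nth_insert_at[OF nj]\<close>)
    moreover have "yz_factor m ?is ?js n = ?X" using li nj by (simp add: yz_factor_def nth_append min_def)
    ultimately show ?thesis by (simp only: prod_upto_Suc)
  qed
  have ZZ: "prod_upto (zz_factor (Suc n) ?js) r = (prod_upto (zz_factor n js) r :: 'k fa)"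
    by (rule prod_upto_cong) (simp add: zz_factor_def nth_insert_at[OF nj])
  have "hpoly m n r is js * ?X = prod_upto (yy_factor is) m * prod_upto (yz_factor m is js) n * (prod_upto (zz_factor n js) r * ?X)"
    unfolding hpoly_factors by (simp add: mult.assoc)
  also have "cong_Ip p \<dots> (prod_upto (yy_factor is) m * prod_upto (yz_factor m is js) n * (?X * prod_upto (zz_factor n js) r))"
    by (rule cong_Ip_lmult, rule cong_Ip_sym, rule central_cong_Ip, rule central_zz_block)
  also have "\<dots> = hpoly m (Suc n) r ?is ?js"
    unfolding hpoly_factors Y YZ ZZ by (simp add: mult.assoc)
  finally show ?thesis .
qed

lemma hpoly_mult_jord_zz:
  assumes lj: "length js = n+2*r"
  shows "hpoly m n r is js * jord (zv a) (zv b) = (hpoly m n (Suc r) is (js @ [a, b]) :: 'k::comm_ring_1 fa)"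
proof -
  have YZ: "prod_upto (yz_factor m is (js @ [a, b])) n = (prod_upto (yz_factor m is js) n :: 'k fa)"
    by (rule prod_upto_cong) (use lj in \<open>simp add: yz_factor_def nth_append\<close>)
  have ZZ: "prod_upto (zz_factor n (js @ [a, b])) (Suc r) = prod_upto (zz_factor n js) r * (jord (zv a) (zv b) :: 'k fa)"
  proof -
    have "prod_upto (zz_factor n (js @ [a, b])) r = (prod_upto (zz_factor n js) r :: 'k fa)"
      by (rule prod_upto_cong) (use lj in \<open>simp add: zz_factor_def nth_append\<close>)
    moreover have "zz_factor n (js @ [a, b]) r = (jord (zv a) (zv b) :: 'k fa)"
      using lj by (simp add: zz_factor_def nth_append)
    ultimately show ?thesis by (simp only: prod_upto_Suc)
  qed
  show ?thesis unfolding hpoly_factors YZ ZZ by (simp add: mult.assoc)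
qed

section \<open>Products of atoms\<close>

definition g_set_within :: "nat \<Rightarrow> nat set \<Rightarrow> 'k::comm_ring_1 fa set" where
  "g_set_within p A = {h * prod_list (map zv ks) | h ks. h \<in> h_set p \<and> sorted_wrt (<) ks \<and> set ks \<subseteq> A}"

lemma g_set_within_subset: "g_set_within p A \<subseteq> (g_set p :: 'k::comm_ring_1 fa set)"
  unfolding g_set_within_def h_set_def g_set_def by blast

lemma g_set_withinI: "h \<in> h_set p \<Longrightarrow> sorted_wrt (<) ks \<Longrightarrow> set ks \<subseteq> A \<Longrightarrow> h * prod_list (map zv ks) \<in> (g_set_within p A :: 'k::comm_ring_1 fa set)"
  unfolding g_set_within_def by blast

lemma g_set_withinE: "g \<in> (g_set_within p A :: 'k::comm_ring_1 fa set) \<Longrightarrow> \<exists>h ks. g = h * prod_list (map zv ks) \<and> h \<in> h_set p \<and> sorted_wrt (<) ks \<and> set ks \<subseteq> A"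
  unfolding g_set_within_def by blast

lemma g_setE: "g \<in> g_set p \<Longrightarrow> \<exists>h ks. g = h * prod_list (map zv ks) \<and> h \<in> (h_set p :: 'k::comm_ring_1 fa set) \<and> sorted_wrt (<) ks"
  unfolding g_set_def h_set_def by blast

lemma span_h_set_mult_zs: "f \<in> span_Ip p (h_set p) \<Longrightarrow> sorted_wrt (<) ks \<Longrightarrow> set ks \<subseteq> A \<Longrightarrow>
   f * prod_list (map zv ks) \<in> span_Ip p (g_set_within p A :: 'k::comm_ring_1 fa set)"
  by (erule span_Ip_rmult) (intro span_Ip_gen g_set_withinI)

lemma span_g_set_within_mult_zv:
  assumes f: "f \<in> span_Ip p (g_set_within p A)" and A: "\<forall>x\<in>A. x < k"
  shows "f * zv k \<in> span_Ip p (g_set_within p (insert k A) :: 'k::comm_ring_1 fa set)"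
proof (rule span_Ip_rmult[OF f])
  fix g assume "g \<in> (g_set_within p A :: 'k fa set)"
  then obtain h ks where g: "g = h * prod_list (map zv ks)" "h \<in> h_set p" "sorted_wrt (<) ks" "set ks \<subseteq> A"
    using g_set_withinE by blast
  have "sorted_wrt (<) (ks @ [k])" using g(3,4) A by (auto simp: sorted_wrt_append)
  then have "h * prod_list (map zv (ks @ [k])) \<in> (g_set_within p (insert k A) :: 'k fa set)"
    using g by (intro g_set_withinI) auto
  then show "g * zv k \<in> span_Ip p (g_set_within p (insert k A))" unfolding g(1) by (simp add: mult.assoc span_Ip_gen)
qed

lemma zv_mult_self: "(2::'k::field) \<noteq> 0 \<Longrightarrow> zv c * zv c = const (1/2) * (jord (zv c) (zv c) :: 'k fa)"
  by (simp add: jord_same mult.assoc[symmetric] const_mult[symmetric] power2_eq_square)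

definition atoms :: "'k::comm_ring_1 fa set" where
  "atoms = {zv c | c. True} \<union> {comm (yv a) (yv b) | a b. True} \<union> {comm (yv a) (zv b) | a b. True}"

definition atom_prods :: "'k::comm_ring_1 fa set" where
  "atom_prods = {prod_list xs | xs. set xs \<subseteq> atoms}"

lemma atom_prodsI: "set xs \<subseteq> atoms \<Longrightarrow> prod_list xs \<in> atom_prods" unfolding atom_prods_def by blast
lemma atom_prodsE: "u \<in> atom_prods \<Longrightarrow> \<exists>xs. u = prod_list xs \<and> set xs \<subseteq> atoms" unfolding atom_prods_def by blast

lemma atom_prods_mult: "u \<in> atom_prods \<Longrightarrow> v \<in> atom_prods \<Longrightarrow> u * v \<in> (atom_prods :: 'k::comm_ring_1 fa set)"
proof -
  assume "u \<in> atom_prods" "v \<in> atom_prods"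
  then obtain xs ys where "u = prod_list xs" "set xs \<subseteq> atoms" "v = prod_list ys" "set ys \<subseteq> atoms"
    using atom_prodsE by metis
  then show ?thesis using atom_prodsI[of "xs @ ys"] by simp
qed

lemma atom_in_atom_prods: "x \<in> atoms \<Longrightarrow> x \<in> atom_prods"
  using atom_prodsI[of "[x]"] by simp

lemma span_atom_prods_mult: "f \<in> span_Ip p atom_prods \<Longrightarrow> g \<in> span_Ip p atom_prods \<Longrightarrow> f * g \<in> span_Ip p (atom_prods :: 'k::comm_ring_1 fa set)"
  by (erule span_Ip_rmult, erule span_Ip_lmult, rule span_Ip_gen, rule atom_prods_mult)

lemma comm_yv_in_span_atom_prods: "set xs \<subseteq> atoms \<Longrightarrow> comm (prod_list xs) (yv b) \<in> span_Ip p (atom_prods :: 'k::comm_ring_1 fa set)"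
proof (induction xs)
  case Nil then show ?case by (simp add: comm_def span_Ip_ideal)
next
  case (Cons x xs)
  have id: "comm (prod_list (x # xs)) (yv b) = x * comm (prod_list xs) (yv b) + comm x (yv b) * prod_list xs"
    by (simp add: comm_def algebra_simps)
  have P: "prod_list xs \<in> (atom_prods :: 'k fa set)" using Cons.prems by (intro atom_prodsI) auto
  have t1: "x * comm (prod_list xs) (yv b) \<in> span_Ip p atom_prods"
  proof (rule span_Ip_lmult)
    show "comm (prod_list xs) (yv b) \<in> span_Ip p atom_prods" using Cons by auto
    fix v assume v: "v \<in> (atom_prods :: 'k fa set)"
    have xa: "x \<in> atoms" using Cons.prems by auto
    show "x * v \<in> span_Ip p atom_prods" by (intro span_Ip_gen atom_prods_mult[OF atom_in_atom_prods[OF xa] v])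
  qed
  have t2: "comm x (yv b) \<in> span_Ip p atom_prods"
  proof -
    have "x \<in> atoms" using Cons.prems by auto
    then consider c where "x = zv c" | a c where "x = comm (yv a) (yv c)" | a c where "x = comm (yv a) (zv c)"
      unfolding atoms_def by blast
    then show ?thesis
    proof cases
      case 1
      have "comm (yv b) (zv c) \<in> (atom_prods :: 'k fa set)" by (rule atom_in_atom_prods) (auto simp: atoms_def)
      then have "const (-1) * comm (yv b) (zv c) \<in> span_Ip p (atom_prods :: 'k fa set)" by (intro span_Ip_smult span_Ip_gen)
      then show ?thesis using 1 by (simp add: const_uminus comm_antisym[of "zv c"])
    next
      case 2
      have "comm (comm (yv a) (yv c)) (yv b) \<in> (Ip p :: 'k fa set)"
        using central_comm_yy unfolding central_def by blast
      then show ?thesis using 2 by (simp add: span_Ip_ideal)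
    next
      case 3
      have "comm (comm (yv a) (zv c)) (yv b) \<in> (Ip p :: 'k fa set)" by (rule Ip_comm_yz_y)
      then show ?thesis using 3 by (simp add: span_Ip_ideal)
    qed
  qed
  have t3: "comm x (yv b) * prod_list xs \<in> span_Ip p atom_prods"
    by (rule span_Ip_rmult[OF t2]) (intro span_Ip_gen atom_prods_mult P)
  show ?case unfolding id by (rule span_Ip_add[OF t1 t3])
qed

lemma comm_var_in_span_atom_prods: "f \<in> span_Ip p atom_prods \<Longrightarrow> comm f (var v) \<in> span_Ip p (atom_prods :: 'k::comm_ring_1 fa set)"
proof (induction rule: span_Ip.induct)
  case (span_Ip_ideal f) then show ?case by (intro span_Ip.span_Ip_ideal) (simp add: comm_def Ip_diff Ip_lmult Ip_rmult)
next
  case (span_Ip_gen u)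
  then obtain xs where u: "u = prod_list xs" "set xs \<subseteq> atoms" using atom_prodsE by blast
  show ?case
  proof (cases v)
    case (Yv b) then show ?thesis using comm_yv_in_span_atom_prods[OF u(2)] u(1) by simp
  next
    case (Zv c)
    have a: "zv c \<in> (atoms :: 'k fa set)" by (auto simp: atoms_def)
    have "u * zv c \<in> (atom_prods :: 'k fa set)" "zv c * u \<in> (atom_prods :: 'k fa set)"
      using atom_prods_mult[OF span_Ip_gen(1) atom_in_atom_prods[OF a]] atom_prods_mult[OF atom_in_atom_prods[OF a] span_Ip_gen(1)] by auto
    then have "u * zv c - zv c * u \<in> span_Ip p (atom_prods :: 'k fa set)" by (rule span_Ip_diff[OF span_Ip.span_Ip_gen span_Ip.span_Ip_gen])
    then show ?thesis using Zv by (simp add: comm_def)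
  qed
next
  case (span_Ip_add f g) then show ?case by (simp add: comm_def algebra_simps) (metis add_diff_eq diff_diff_eq2 span_Ip.span_Ip_add diff_add_eq)
next
  case (span_Ip_smult f c)
  have "comm (const c * f) (var v) = const c * comm f (var v)"
  proof -
    have "var v * const c = const c * (var v :: 'k fa)" by (rule const_comm[symmetric])
    then show ?thesis by (simp add: comm_def right_diff_distrib mult.assoc) (metis mult.assoc)
  qed
  then show ?case using span_Ip_smult by (simp add: span_Ip.span_Ip_smult)
qed

lemma comm_vars_in_span_atom_prods: "comm (var x) (var y) \<in> span_Ip p (atom_prods :: 'k::comm_ring_1 fa set)"
proof (cases x)
  case (Yv a)
  show ?thesis
  proof (cases y)
    case (Yv b)
    then show ?thesis using \<open>x = Yv a\<close> by (intro span_Ip_gen atom_in_atom_prods) (auto simp: atoms_def)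
  next
    case (Zv b)
    then show ?thesis using \<open>x = Yv a\<close> by (intro span_Ip_gen atom_in_atom_prods) (auto simp: atoms_def)
  qed
next
  case (Zv a)
  show ?thesis
  proof (cases y)
    case (Yv b)
    have "const (-1) * comm (yv b) (zv a) \<in> span_Ip p (atom_prods :: 'k fa set)"
      by (intro span_Ip_smult span_Ip_gen atom_in_atom_prods) (auto simp: atoms_def)
    then show ?thesis using \<open>x = Zv a\<close> Yv by (simp add: const_uminus comm_antisym[of "zv a"])
  next
    case (Zv b)
    have a: "zv a \<in> (atoms :: 'k fa set)" "zv b \<in> (atoms :: 'k fa set)" by (auto simp: atoms_def)
    have "zv a * zv b \<in> (atom_prods :: 'k fa set)" "zv b * zv a \<in> (atom_prods :: 'k fa set)"
      using atom_prods_mult[OF atom_in_atom_prods[OF a(1)] atom_in_atom_prods[OF a(2)]] atom_prods_mult[OF atom_in_atom_prods[OF a(2)] atom_in_atom_prods[OF a(1)]] by auto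
    then have "zv a * zv b - zv b * zv a \<in> span_Ip p (atom_prods :: 'k fa set)" by (rule span_Ip_diff[OF span_Ip_gen span_Ip_gen])
    then show ?thesis using \<open>x = Zv a\<close> Zv by (simp add: comm_def)
  qed
qed

lemma lcomm_in_span_atom_prods: "f \<in> span_Ip p atom_prods \<Longrightarrow> foldl comm f (map var ys) \<in> span_Ip p (atom_prods :: 'k::comm_ring_1 fa set)"
  by (induction ys arbitrary: f) (auto intro: comm_var_in_span_atom_prods)

lemma Y_proper_in_span_atom_prods: "f \<in> Y_proper \<Longrightarrow> f \<in> span_Ip p (atom_prods :: 'k::comm_ring_1 fa set)"
proof (induction rule: Y_proper.induct)
  case (const c)
  have "const c * prod_list [] \<in> span_Ip p (atom_prods :: 'k fa set)" by (intro span_Ip_smult span_Ip_gen atom_prodsI) auto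
  then show ?case by simp
next
  case (zvar i)
  then show ?case by (intro span_Ip_gen atom_in_atom_prods) (auto simp: atoms_def)
next
  case (commutator xs x)
  then obtain y ys where "xs = y # ys" by (cases xs) auto
  then show ?case unfolding lcomm_def using lcomm_in_span_atom_prods[OF comm_vars_in_span_atom_prods[where p=p and x=x and y=y]] by simp
next
  case (add f g) show ?case by (rule span_Ip_add[OF add.IH])
next
  case (mult f g) show ?case by (rule span_atom_prods_mult[OF mult.IH])
qed

context
  fixes p :: nat
  assumes podd: "odd p" and two: "(2::'k::field) \<noteq> 0"
begin

lemma g_mult_comm_yy_in_span:
  assumes h: "h \<in> (h_set p :: 'k fa set)" and ks: "sorted_wrt (<) ks"
  shows "h * prod_list (map zv ks) * comm (yv a) (yv b) \<in> span_Ip p (g_set p)"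
proof -
  obtain m n r "is" js where hh: "h = hpoly m n r is js" "length is = 2*m+n" "length js = n+2*r"
    using h_setE[OF h] by blast
  let ?X = "comm (yv a) (yv b) :: 'k fa" and ?Z = "prod_list (map zv ks) :: 'k fa"
  have "h * ?Z * ?X = h * (?Z * ?X)" by (simp add: mult.assoc)
  also have "cong_Ip p \<dots> (h * (?X * ?Z))" by (rule cong_Ip_lmult, rule central_cong_Ip, rule central_comm_yy)
  also have "\<dots> = (h * ?X) * ?Z" by (simp add: mult.assoc)
  also have "cong_Ip p \<dots> ((?X * h) * ?Z)" by (rule cong_Ip_rmult, rule central_cong_Ip, rule central_comm_yy)
  also have "\<dots> = hpoly (Suc m) n r (a # b # is) js * ?Z" unfolding hh comm_yy_mult_hpoly ..
  finally have c: "cong_Ip p (h * ?Z * ?X) (hpoly (Suc m) n r (a # b # is) js * ?Z)" .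
  have "hpoly (Suc m) n r (a # b # is) js * ?Z \<in> span_Ip p (g_set_within p (set ks))"
    by (rule span_h_set_mult_zs[OF hpoly_in_span_h_set[OF podd two] ks]) (use hh in auto)
  then have "hpoly (Suc m) n r (a # b # is) js * ?Z \<in> span_Ip p (g_set p)"
    by (rule span_Ip_mono) (rule g_set_within_subset)
  then show ?thesis by (rule span_Ip_cong[OF c])
qed

lemma g_mult_comm_yz_in_span:
  assumes h: "h \<in> (h_set p :: 'k fa set)" and ks: "sorted_wrt (<) ks"
  shows "h * prod_list (map zv ks) * comm (yv a) (zv b) \<in> span_Ip p (g_set p)"
proof -
  obtain m n r "is" js where hh: "h = hpoly m n r is js" "length is = 2*m+n" "length js = n+2*r"
    using h_setE[OF h] by blast
  let ?X = "comm (yv a) (zv b) :: 'k fa" and ?Z = "prod_list (map zv ks) :: 'k fa"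
  let ?s = "(-1::'k) ^ length ks"
  have ss: "?s * ?s = 1" by (simp add: power_mult_distrib[symmetric])
  have a1: "cong_Ip p (?X * ?Z) (const ?s * (?Z * ?X))" by (rule cong_Ip_yz_zs)
  have a2: "cong_Ip p (?Z * ?X) (const ?s * (?X * ?Z))"
  proof -
    have "?Z * ?X = const ?s * (const ?s * (?Z * ?X))"
      using ss by (simp add: mult.assoc[symmetric] const_mult[symmetric])
    also have "cong_Ip p \<dots> (const ?s * (?X * ?Z))" by (rule cong_Ip_lmult, rule cong_Ip_sym, rule a1)
    finally show ?thesis .
  qed
  let ?js = "take n js @ b # drop n js" and ?is = "is @ [a]"
  have "h * ?Z * ?X = h * (?Z * ?X)" by (simp add: mult.assoc)
  also have "cong_Ip p \<dots> (h * (const ?s * (?X * ?Z)))" by (rule cong_Ip_lmult, rule a2)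
  also have "\<dots> = const ?s * ((h * ?X) * ?Z)" by (simp only: mult_const_left_commute mult.assoc)
  also have "cong_Ip p \<dots> (const ?s * (hpoly m (Suc n) r ?is ?js * ?Z))"
    unfolding hh(1) by (rule cong_Ip_lmult, rule cong_Ip_rmult, rule hpoly_mult_comm_yz[OF hh(2,3)])
  finally have c: "cong_Ip p (h * ?Z * ?X) (const ?s * (hpoly m (Suc n) r ?is ?js * ?Z))" .
  have "hpoly m (Suc n) r ?is ?js * ?Z \<in> span_Ip p (g_set_within p (set ks))"
    by (rule span_h_set_mult_zs[OF hpoly_in_span_h_set[OF podd two] ks]) (use hh in auto)
  then have "hpoly m (Suc n) r ?is ?js * ?Z \<in> span_Ip p (g_set p)"
    by (rule span_Ip_mono) (rule g_set_within_subset)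
  then show ?thesis by (intro span_Ip_cong[OF c] span_Ip_smult)
qed

lemma g_mult_jord_zz_in_span:
  assumes h: "h \<in> (h_set p :: 'k fa set)" and ks: "sorted_wrt (<) ks" "set ks \<subseteq> A"
  shows "h * prod_list (map zv ks) * jord (zv a) (zv b) \<in> span_Ip p (g_set_within p A)"
proof -
  obtain m n r "is" js where hh: "h = hpoly m n r is js" "length is = 2*m+n" "length js = n+2*r"
    using h_setE[OF h] by blast
  let ?J = "jord (zv a) (zv b) :: 'k fa" and ?Z = "prod_list (map zv ks) :: 'k fa"
  have "h * ?Z * ?J = h * (?Z * ?J)" by (simp add: mult.assoc)
  also have "cong_Ip p \<dots> (h * (?J * ?Z))" by (rule cong_Ip_lmult, rule central_cong_Ip, rule central_jord_zz)
  also have "\<dots> = hpoly m n (Suc r) is (js @ [a, b]) * ?Z"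
    unfolding hh(1) hpoly_mult_jord_zz[OF hh(3), symmetric] by (simp add: mult.assoc)
  finally have c: "cong_Ip p (h * ?Z * ?J) (hpoly m n (Suc r) is (js @ [a, b]) * ?Z)" .
  have "hpoly m n (Suc r) is (js @ [a, b]) * ?Z \<in> span_Ip p (g_set_within p A)"
    by (rule span_h_set_mult_zs[OF hpoly_in_span_h_set[OF podd two] ks]) (use hh in auto)
  then show ?thesis by (rule span_Ip_cong[OF c])
qed

lemma g_mult_zv_in_span_within:
  assumes h: "h \<in> (h_set p :: 'k fa set)" and ks: "sorted_wrt (<) ks"
  shows "h * prod_list (map zv ks) * zv c \<in> span_Ip p (g_set_within p (insert c (set ks)))"
  using ks
proof (induction ks rule: rev_induct)
  case Nil
  have "h * prod_list (map zv [c]) \<in> (g_set_within p (insert c (set [])) :: 'k fa set)"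
    using h by (intro g_set_withinI) auto
  then show ?case by (simp add: span_Ip_gen)
next
  case (snoc k ks)
  have sks: "sorted_wrt (<) ks" and lt: "\<forall>x\<in>set ks. x < k"
    using snoc.prems by (auto simp: sorted_wrt_append)
  let ?A = "insert c (set (ks @ [k]))" and ?Z = "prod_list (map zv ks) :: 'k fa"
  have eqZ: "h * prod_list (map zv (ks @ [k])) * zv c = h * ?Z * (zv k * zv c)" by (simp add: mult.assoc)
  consider "k < c" | "k = c" | "c < k" by linarith
  then show ?case
  proof cases
    case 1
    have "h * prod_list (map zv (ks @ [k])) \<in> (g_set_within p (set (ks @ [k])) :: 'k fa set)"
      using h snoc.prems by (intro g_set_withinI) auto
    then have "h * prod_list (map zv (ks @ [k])) * zv c \<in> span_Ip p (g_set_within p (insert c (set (ks @ [k]))))"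
      using 1 lt by (intro span_g_set_within_mult_zv span_Ip_gen) auto
    then show ?thesis .
  next
    case 2
    have "h * ?Z * jord (zv c) (zv c) \<in> span_Ip p (g_set_within p ?A)"
      by (rule g_mult_jord_zz_in_span[OF h sks]) auto
    then have "const (1/2) * (h * ?Z * jord (zv c) (zv c)) \<in> span_Ip p (g_set_within p ?A)"
      by (rule span_Ip_smult)
    moreover have "h * ?Z * (zv k * zv c) = const (1/2) * (h * ?Z * jord (zv c) (zv c))"
      unfolding 2 zv_mult_self[OF two] by (rule mult_const_left_commute)
    ultimately show ?thesis unfolding eqZ by simp
  next
    case 3
    text \<open>In \<open>z\<^sub>k z\<^sub>c = z\<^sub>c \<circ> z\<^sub>k - z\<^sub>c z\<^sub>k\<close> the second term is the induction hypothesis for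
      \<open>z\<^sub>c\<close> followed by \<open>z\<^sub>k\<close>, whose index exceeds all indices occurring there.\<close>
    have "h * ?Z * jord (zv c) (zv k) \<in> span_Ip p (g_set_within p ?A)"
      by (rule g_mult_jord_zz_in_span[OF h sks]) auto
    moreover have "h * ?Z * zv c * zv k \<in> span_Ip p (g_set_within p (insert k (insert c (set ks))))"
      using lt 3 by (intro span_g_set_within_mult_zv[OF snoc.IH[OF sks]]) auto
    moreover have "h * ?Z * (zv k * zv c) = h * ?Z * jord (zv c) (zv k) - h * ?Z * zv c * zv k"
      by (simp add: jord_def algebra_simps)
    ultimately show ?thesis unfolding eqZ by (simp add: span_Ip_diff insert_commute)
  qed
qed

lemma one_in_g_set: "(1 :: 'k fa) \<in> g_set p"
proof -
  have "hpoly 0 0 0 [] [] \<in> (h_set p :: 'k fa set)"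
  proof (rule h_setI)
    show "\<forall>c. deg_in (Zv c) (hpoly 0 0 0 [] [] :: 'k fa) < p"
      using deg_in_hpoly_less[of "[]" 0 0 _ p] podd by (auto elim: oddE)
  qed auto
  then have "hpoly 0 0 0 [] [] * prod_list (map zv []) \<in> (g_set_within p {} :: 'k fa set)" by (intro g_set_withinI) auto
  then show ?thesis using g_set_within_subset by (force simp: hpoly_def)
qed

lemma span_g_set_mult_atom: "f \<in> span_Ip p (g_set p) \<Longrightarrow> x \<in> (atoms :: 'k fa set) \<Longrightarrow> f * x \<in> span_Ip p (g_set p)"
proof (erule span_Ip_rmult)
  fix g assume x: "x \<in> atoms" and g: "g \<in> (g_set p :: 'k fa set)"
  then obtain h ks where hk: "g = h * prod_list (map zv ks)" "h \<in> h_set p" "sorted_wrt (<) ks"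
    using g_setE by blast
  from x consider c where "x = zv c" | a c where "x = comm (yv a) (yv c)" | a c where "x = comm (yv a) (zv c)"
    unfolding atoms_def by blast
  then show "g * x \<in> span_Ip p (g_set p)"
  proof cases
    case 1 then show ?thesis using g_mult_zv_in_span_within[OF hk(2,3)] g_set_within_subset hk(1) by (metis span_Ip_mono)
  next
    case 2 then show ?thesis using g_mult_comm_yy_in_span[OF hk(2,3)] hk(1) by simp
  next
    case 3 then show ?thesis using g_mult_comm_yz_in_span[OF hk(2,3)] hk(1) by simp
  qed
qed

lemma atom_prod_in_span_g_set: "set xs \<subseteq> atoms \<Longrightarrow> prod_list xs \<in> span_Ip p (g_set p :: 'k fa set)"
proof (induction xs rule: rev_induct)
  case Nil then show ?case using one_in_g_set by (simp add: span_Ip_gen)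
next
  case (snoc x xs) then show ?case using span_g_set_mult_atom by simp
qed

lemma Y_proper_in_span_g_set: "f \<in> Y_proper \<Longrightarrow> f \<in> span_Ip p (g_set p :: 'k fa set)"
  by (rule span_Ip_trans[OF Y_proper_in_span_atom_prods]) (auto dest!: atom_prodsE intro: atom_prod_in_span_g_set)

end

lemma odd_CHAR: "CHAR('k::idom) > 2 \<Longrightarrow> odd CHAR('k)"
  by (intro prime_odd_nat prime_CHAR_semidom) simp_all

lemma two_neq_zero_CHAR:
  assumes "CHAR('k::idom) > 2"
  shows "(2::'k) \<noteq> 0"
proof
  assume "(2::'k) = 0"
  then have "of_nat 2 = (0::'k)" by simp
  then have "CHAR('k) dvd 2" by (simp only: of_nat_eq_0_iff_char_dvd)
  with assms show False by (auto dest: dvd_imp_le)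
qed

theorem mainTheorem9:
  fixes p :: nat
  assumes "infinite (UNIV :: 'k::field set)"
    and "CHAR('k) = p" and "p > 2"
    and "(f :: 'k fa) \<in> Y_proper"
  shows "\<exists>cs gs. set gs \<subseteq> g_set p \<and> length cs = length gs \<and>
           f - sum_list (map2 (\<lambda>c g. const c * g) cs gs) \<in> Ip p"
proof -
  have "odd p" "(2::'k) \<noteq> 0" using odd_CHAR two_neq_zero_CHAR assms(2,3) by auto
  then have "f \<in> span_Ip p (g_set p)" using Y_proper_in_span_g_set assms(4) by blast
  then show ?thesis by (rule span_Ip_explicit)
qed

end
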